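(* Let $\epsilon\in(0,1]^{\mathbb{N}}$. The family of measures $\{\mu_{\mathrm{can}}|_{\pi^{-1}(\omega)}\}_{\omega\in\beta\mathbb{N}}$ on $\mathbb{P}^{1,an}_{A^\epsilon}$ is continuous, i.e. $\omega\mapsto\mu_{\mathrm{can}}|_{\pi^{-1}(\omega)}$ is continuous for the weak-$*$ topology of measures on $\mathbb{P}^{1,an}_{A^\epsilon}$.
   Context: $A^\epsilon=\{(a_n)\in\mathbb{C}^{\mathbb{N}}:\sup_n|a_n|^{\epsilon_n}<\infty\}$ with norm $\sup_n|a_n|^{\epsilon_n}$; $\beta\mathbb{N}$ the set of ultrafilters on $\mathbb{N}$, identified with the Berkovich spectrum of $A^\epsilon$ via $\omega\mapsto(a\mapsto\lim_\omega|a_n|^{\epsilon_n})$; $\mathscr{H}(\omega)$ the completed residue field at $\omega$, which is either isometric to $(\mathbb{C},|\cdot|^e)$ for some $e\in(0,1]$ or non-Archimedean. $\mathbb{P}^{1,an}_{A^\epsilon}$ is the Berkovich projective line over $A^\epsilon$ with projection $\pi$ onto $\beta\mathbb{N}$ and $\pi^{-1}(\omega)\simeq\mathbb{P}^{1,an}_{\mathscr{H}(\omega)}$. On $\mathbb{P}^{1,an}_k$, $\mu_{\mathrm{can}}$ is the Haar probability measure on the unit circle $\{|z|=1\}$ if $k$ is Archimedean, and the Dirac mass at the Gauss point (the seminorm $P\mapsto\max_{|z|\le1}|P(z)|$) if $k$ is non-Archimedean. *)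

theory Defs
  imports "HOL-Analysis.Analysis" "HOL-Probability.Probability"
          "HOL-Library.Function_Algebras" "HOL-Computational_Algebra.Polynomial"
begin

text \<open>Elements of the Banach ring A^eps are complex sequences; ring operations on
  nat => complex are pointwise (Function_Algebras).\<close>

type_synonym seq = "nat \<Rightarrow> complex"
type_synonym seminorm = "seq poly \<Rightarrow> real"
type_synonym P1point = "bool \<times> seminorm"

definition Aeps :: "(nat \<Rightarrow> real) \<Rightarrow> seq set" where
  "Aeps \<epsilon> = {a. bdd_above (range (\<lambda>n. cmod (a n) powr \<epsilon> n))}"

definition normA :: "(nat \<Rightarrow> real) \<Rightarrow> seq \<Rightarrow> real" where
  "normA \<epsilon> a = (SUP n. cmod (a n) powr \<epsilon> n)"

definition Apoly :: "(nat \<Rightarrow> real) \<Rightarrow> seq poly set" where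
  "Apoly \<epsilon> = {P. \<forall>k. coeff P k \<in> Aeps \<epsilon>}"

text \<open>Points of the Berkovich affine line A^{1,an}_{A^eps}: multiplicative seminorms on
  A^eps[T] bounded on A^eps by the norm (extended by 0 outside A^eps[T]).\<close>
definition Berk_A1 :: "(nat \<Rightarrow> real) \<Rightarrow> seminorm set" where
  "Berk_A1 \<epsilon> = {x.
     (\<forall>P. P \<notin> Apoly \<epsilon> \<longrightarrow> x P = 0) \<and>
     (\<forall>P\<in>Apoly \<epsilon>. 0 \<le> x P) \<and> x 0 = 0 \<and> x 1 = 1 \<and>
     (\<forall>P\<in>Apoly \<epsilon>. \<forall>Q\<in>Apoly \<epsilon>. x (P + Q) \<le> x P + x Q) \<and>
     (\<forall>P\<in>Apoly \<epsilon>. \<forall>Q\<in>Apoly \<epsilon>. x (P * Q) = x P * x Q) \<and>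
     (\<forall>a\<in>Aeps \<epsilon>. x [:a:] \<le> normA \<epsilon> a)}"

definition Disc :: "(nat \<Rightarrow> real) \<Rightarrow> seminorm set" where
  "Disc \<epsilon> = {x \<in> Berk_A1 \<epsilon>. x [:0, 1:] \<le> 1}"

text \<open>P^{1,an} is glued from the disc {|T|<=1} (tag False, coordinate T) and the disc
  {|S|<=1} (coordinate S = 1/T); points with |S| < 1 are stored with tag True, points with
  |S| = 1 are identified with the point of the first disc given by P |-> |reflect P|.\<close>
definition flipS :: "(nat \<Rightarrow> real) \<Rightarrow> seminorm \<Rightarrow> seminorm" where
  "flipS \<epsilon> y = (\<lambda>P. if P \<in> Apoly \<epsilon> then y (reflect_poly P) else 0)"

definition chart0 :: "seminorm \<Rightarrow> P1point" where
  "chart0 x = (False, x)"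

definition chartInf :: "(nat \<Rightarrow> real) \<Rightarrow> seminorm \<Rightarrow> P1point" where
  "chartInf \<epsilon> y = (if y [:0, 1:] < 1 then (True, y) else (False, flipS \<epsilon> y))"

definition P1 :: "(nat \<Rightarrow> real) \<Rightarrow> P1point set" where
  "P1 \<epsilon> = chart0 ` Disc \<epsilon> \<union> chartInf \<epsilon> ` Disc \<epsilon>"

text \<open>Each disc carries the (Berkovich) topology of pointwise convergence, i.e. the
  subspace topology of the product topology on seq poly => real; P^{1,an} carries the
  glued topology (the two closed discs form a finite closed cover).\<close>
definition P1top :: "(nat \<Rightarrow> real) \<Rightarrow> P1point topology" where
  "P1top \<epsilon> = topology (\<lambda>U. U \<subseteq> P1 \<epsilon> \<and>
      openin (subtopology euclidean (Disc \<epsilon>)) {x \<in> Disc \<epsilon>. chart0 x \<in> U} \<and>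
      openin (subtopology euclidean (Disc \<epsilon>)) {y \<in> Disc \<epsilon>. chartInf \<epsilon> y \<in> U})"

text \<open>Stone-Cech compactification beta N: ultrafilters on N with the Stone topology.\<close>
definition ultrafilter_on_nat :: "nat filter \<Rightarrow> bool" where
  "ultrafilter_on_nat \<omega> \<longleftrightarrow> \<omega> \<noteq> bot \<and> (\<forall>A. eventually (\<lambda>n. n \<in> A) \<omega> \<or> eventually (\<lambda>n. n \<notin> A) \<omega>)"

definition betaN :: "nat filter set" where
  "betaN = {\<omega>. ultrafilter_on_nat \<omega>}"

definition betaN_top :: "nat filter topology" where
  "betaN_top = topology (\<lambda>U. U \<subseteq> betaN \<and>
      (\<forall>\<omega>\<in>U. \<exists>A. eventually (\<lambda>n. n \<in> A) \<omega> \<and> {\<nu> \<in> betaN. eventually (\<lambda>n. n \<in> A) \<nu>} \<subseteq> U))"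

definition borel_on :: "'a topology \<Rightarrow> 'a measure" where
  "borel_on T = sigma (topspace T) {U. openin T U}"

definition absw :: "(nat \<Rightarrow> real) \<Rightarrow> nat filter \<Rightarrow> seq \<Rightarrow> real" where
  "absw \<epsilon> \<omega> a = Lim \<omega> (\<lambda>n. cmod (a n) powr \<epsilon> n)"

text \<open>The point of the fibre over omega given by evaluation at z (an element of A^eps,
  mapped to H(omega)).\<close>
definition evalpt :: "(nat \<Rightarrow> real) \<Rightarrow> nat filter \<Rightarrow> seq \<Rightarrow> seminorm" where
  "evalpt \<epsilon> \<omega> z = (\<lambda>P. if P \<in> Apoly \<epsilon> then absw \<epsilon> \<omega> (poly P z) else 0)"

definition gauss :: "(nat \<Rightarrow> real) \<Rightarrow> nat filter \<Rightarrow> seminorm" where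
  "gauss \<epsilon> \<omega> = (\<lambda>P. if P \<in> Apoly \<epsilon>
      then (SUP z\<in>{z \<in> Aeps \<epsilon>. absw \<epsilon> \<omega> z \<le> 1}. absw \<epsilon> \<omega> (poly P z)) else 0)"

text \<open>H(omega) is Archimedean iff |2| > 1.\<close>
definition archimedean_at :: "(nat \<Rightarrow> real) \<Rightarrow> nat filter \<Rightarrow> bool" where
  "archimedean_at \<epsilon> \<omega> \<longleftrightarrow> absw \<epsilon> \<omega> (\<lambda>n. 2) > 1"

text \<open>mu_can on the fibre over omega, as a Borel measure on P^{1,an}_{A^eps}:
  Haar probability on the unit circle (Archimedean case), Dirac mass at the Gauss point
  (non-Archimedean case).\<close>
definition mu_can_fibre :: "(nat \<Rightarrow> real) \<Rightarrow> nat filter \<Rightarrow> P1point measure" where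
  "mu_can_fibre \<epsilon> \<omega> =
     (if archimedean_at \<epsilon> \<omega>
      then distr (uniform_measure lborel {0..2*pi}) (borel_on (P1top \<epsilon>))
             (\<lambda>\<theta>. chart0 (evalpt \<epsilon> \<omega> (\<lambda>n. cis \<theta>)))
      else return (borel_on (P1top \<epsilon>)) (chart0 (gauss \<epsilon> \<omega>)))"

text \<open>Weak-* topology on measures on P^{1,an}: initial topology of mu |-> int f dmu,
  f ranging over continuous real functions on P^{1,an}.\<close>
definition weak_star_top :: "(nat \<Rightarrow> real) \<Rightarrow> P1point measure topology" where
  "weak_star_top \<epsilon> = topology_generated_by
     {{\<mu>. (\<integral>p. f p \<partial>\<mu>) \<in> U} | f U. continuous_map (P1top \<epsilon>) euclideanreal f \<and> open U}"

end

theory Submission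
  imports Defs "HOL-Computational_Algebra.Fundamental_Theorem_Algebra"
begin

text \<open>
  For a continuous \<open>f\<close> on \<open>\<P>\<^sup>1\<close> put \<open>F(\<omega>) = \<integral> f d\<mu>\<^sub>\<omega>\<close>. The sets \<open>{\<nu>. A \<in> \<nu>}\<close> form a
  basis of \<open>\<beta>\<nat>\<close>, so \<open>F\<close> is continuous once \<open>F(\<omega>)\<close> is the \<open>\<omega>\<close>-limit of \<open>F(n)\<close> for the
  principal ultrafilters \<open>n\<close>. These are Archimedean, and \<open>\<mu>\<^sub>n\<close> is the image of the Haar
  measure under \<open>t \<mapsto> (P \<mapsto> |P\<^sub>n(e\<^sup>i\<^sup>t)|\<^sup>\<epsilon>\<^sup>n)\<close>, where \<open>P\<^sub>n\<close> is the \<open>n\<close>-th coordinate of \<open>P\<close>.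

  If \<open>\<omega>\<close> is Archimedean, \<open>\<epsilon>\<^sub>n\<close> stays away from 0 along \<open>\<omega>\<close>, so the coefficients of the \<open>P\<^sub>n\<close>
  stay bounded, the functions \<open>w \<mapsto> |P\<^sub>n(w)|\<^sup>\<epsilon>\<^sup>n\<close> are equicontinuous and converge uniformly on
  the unit circle to \<open>w \<mapsto> |P(w)|\<^sub>\<omega>\<close>; uniform continuity of \<open>f\<close> near the compact image of the
  circle gives convergence of the integrals.

  If \<open>\<omega>\<close> is non-Archimedean, \<open>\<epsilon>\<^sub>n \<rightarrow> 0\<close> along \<open>\<omega>\<close> and the Gauss norm of \<open>P\<close> is the \<open>\<omega>\<close>-limit
  of \<open>\<parallel>P\<^sub>n\<parallel>\<^sub>1\<^sup>\<epsilon>\<^sup>n\<close>. Away from a set of angles of small Haar measure, where \<open>e\<^sup>i\<^sup>t\<close> is close to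
  a root, \<open>|P\<^sub>n(e\<^sup>i\<^sup>t)| \<ge> c \<parallel>P\<^sub>n\<parallel>\<^sub>1\<close> with \<open>c\<close> depending only on the degree; as \<open>c\<^sup>\<epsilon>\<^sup>n \<rightarrow> 1\<close>, the
  measures \<open>\<mu>\<^sub>n\<close> concentrate at the Gauss point.
\<close>

section \<open>Ultrafilters on the natural numbers\<close>

lemma ultrafilter_on_nat_cases:
  assumes "ultrafilter_on_nat \<omega>"
  shows "eventually P \<omega> \<or> eventually (\<lambda>n. \<not> P n) \<omega>"
  using assms unfolding ultrafilter_on_nat_def
  by (metis (mono_tags, lifting) eventually_mono mem_Collect_eq)

lemma ultrafilter_on_nat_not_bot: "ultrafilter_on_nat \<omega> \<Longrightarrow> \<omega> \<noteq> bot"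
  unfolding ultrafilter_on_nat_def by auto

lemma ultrafilter_tendsto_le:
  fixes f g :: "nat \<Rightarrow> real"
  assumes "ultrafilter_on_nat \<omega>" "(f \<longlongrightarrow> a) \<omega>" "(g \<longlongrightarrow> b) \<omega>" "eventually (\<lambda>n. f n \<le> g n) \<omega>"
  shows "a \<le> b"
  using tendsto_le[OF ultrafilter_on_nat_not_bot] assms by blast

lemma ultrafilter_tendsto_unique:
  fixes f :: "nat \<Rightarrow> real"
  assumes "ultrafilter_on_nat \<omega>" "(f \<longlongrightarrow> a) \<omega>" "(f \<longlongrightarrow> b) \<omega>"
  shows "a = b"
  using tendsto_unique[OF ultrafilter_on_nat_not_bot] assms by blast

text \<open>The limit is the supremum of the numbers that the sequence eventually exceeds.\<close>

lemma tendsto_Lim_ultrafilter_on_nat: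
  fixes f :: "nat \<Rightarrow> real"
  assumes U: "ultrafilter_on_nat \<omega>" and bounds: "\<And>n. a \<le> f n" "\<And>n. f n \<le> b"
  shows "(f \<longlongrightarrow> Lim \<omega> f) \<omega>"
proof -
  define S where "S = {x. eventually (\<lambda>n. x \<le> f n) \<omega>}"
  have "a \<in> S" using bounds unfolding S_def by auto
  have bdd: "bdd_above S"
  proof (rule bdd_aboveI)
    fix x assume "x \<in> S"
    then have "eventually (\<lambda>n. x \<le> f n) \<omega>" by (simp add: S_def)
    then have "eventually (\<lambda>n. x \<le> b) \<omega>" by (rule eventually_mono) (meson bounds(2) order_trans)
    then show "x \<le> b" using ultrafilter_on_nat_not_bot[OF U] by (simp add: eventually_const_iff)
  qed
  have "(f \<longlongrightarrow> Sup S) \<omega>"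
  proof (rule order_tendstoI)
    fix y assume "y < Sup S"
    then obtain x where "x \<in> S" "y < x" using \<open>a \<in> S\<close> bdd less_cSup_iff by blast
    then show "eventually (\<lambda>n. y < f n) \<omega>" unfolding S_def by (auto elim: eventually_mono)
  next
    fix y assume "Sup S < y"
    then have "y \<notin> S" using bdd cSup_upper by fastforce
    then show "eventually (\<lambda>n. f n < y) \<omega>"
      using ultrafilter_on_nat_cases[OF U, of "\<lambda>n. y \<le> f n"] by (auto simp: S_def not_le)
  qed
  then show ?thesis using ultrafilter_on_nat_not_bot[OF U] by (simp add: tendsto_Lim)
qed

lemma ultrafilter_on_nat_principal: "ultrafilter_on_nat (principal {n})"
  unfolding ultrafilter_on_nat_def by (auto simp: eventually_principal principal_eq_bot_iff)

lemma Lim_principal_singleton: "Lim (principal {n}) f = (f n :: real)"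
  by (rule tendsto_Lim) (auto simp: tendsto_principal_singleton principal_eq_bot_iff)


lemma powr_add_le:
  fixes s t e :: real
  assumes "0 \<le> s" "0 \<le> t" "0 < e" "e \<le> 1"
  shows "(s + t) powr e \<le> s powr e + t powr e"
proof (cases "s + t = 0")
  case True then show ?thesis using assms by auto
next
  case False
  then have st: "0 < s + t" using assms by auto
  have le_powr: "u \<le> u powr e" if "0 \<le> u" "u \<le> 1" for u :: real
  proof (cases "u = 0")
    case False
    have "u powr 1 \<le> u powr e" using that assms by (intro powr_mono') auto
    then show ?thesis using that by simp
  qed simp
  have "1 = s / (s + t) + t / (s + t)" using st by (simp add: add_divide_distrib[symmetric])
  also have "\<dots> \<le> (s / (s + t)) powr e + (t / (s + t)) powr e"
    using assms st by (intro add_mono le_powr) auto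
  finally have "(s + t) powr e * 1 \<le> (s + t) powr e * ((s / (s + t)) powr e + (t / (s + t)) powr e)"
    by (intro mult_left_mono) auto
  also have "\<dots> = s powr e + t powr e"
    using assms st by (simp add: powr_divide distrib_left)
  finally show ?thesis by simp
qed

lemma powr_sum_le:
  fixes t :: "'i \<Rightarrow> real"
  assumes "finite I" "\<And>i. i \<in> I \<Longrightarrow> 0 \<le> t i" "0 < e" "e \<le> 1"
  shows "(\<Sum>i\<in>I. t i) powr e \<le> (\<Sum>i\<in>I. t i powr e)"
  using assms
proof (induction I rule: finite_induct)
  case (insert x F)
  have "(\<Sum>i\<in>insert x F. t i) powr e \<le> t x powr e + (\<Sum>i\<in>F. t i) powr e"
    using insert by (simp, intro powr_add_le) (auto intro: sum_nonneg)
  also have "\<dots> \<le> t x powr e + (\<Sum>i\<in>F. t i powr e)" using insert by simp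
  finally show ?case using insert by simp
qed simp

lemma abs_powr_diff_le:
  fixes s t e :: real
  assumes "0 \<le> s" "0 \<le> t" "0 < e" "e \<le> 1"
  shows "\<bar>s powr e - t powr e\<bar> \<le> \<bar>s - t\<bar> powr e"
proof -
  have "u powr e \<le> v powr e + \<bar>u - v\<bar> powr e" if "0 \<le> u" "0 \<le> v" for u v :: real
  proof -
    have "u powr e \<le> (v + \<bar>u - v\<bar>) powr e" using that assms by (intro powr_mono2) auto
    also have "\<dots> \<le> v powr e + \<bar>u - v\<bar> powr e" using that assms by (intro powr_add_le) auto
    finally show ?thesis .
  qed
  from this[of s t] this[of t s] show ?thesis using assms by (simp add: abs_minus_commute)
qed

lemma power_powr_commute: "0 \<le> (x::real) \<Longrightarrow> (x ^ n) powr e = (x powr e) ^ n"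
  by (induction n) (auto simp: powr_mult)

lemma max_one_powr: "0 \<le> (t::real) \<Longrightarrow> 0 < e \<Longrightarrow> (max 1 t) powr e = max 1 (t powr e)"
  using powr_le1[of e t] ge_one_powr_ge_zero[of t e] by (cases "t \<le> 1") (auto simp: max_def)


section \<open>Coordinate polynomials and the \<open>\<ell>\<^sup>1\<close>-norm\<close>

definition slice_poly :: "seq poly \<Rightarrow> nat \<Rightarrow> complex poly" where
  "slice_poly P n = map_poly (\<lambda>a. a n) P"

lemma coeff_slice_poly: "coeff (slice_poly P n) k = coeff P k n"
  unfolding slice_poly_def by (simp add: coeff_map_poly)

lemma degree_slice_poly_le: "degree (slice_poly P n) \<le> degree P"
  by (rule degree_le) (simp add: coeff_slice_poly coeff_eq_0)

lemma poly_slice_poly: "poly P z n = poly (slice_poly P n) (z n)"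
  by (induction P) (simp_all add: slice_poly_def map_poly_pCons)

lemma poly_slice_poly_const: "poly (slice_poly P n) w = poly P (\<lambda>_. w) n"
  by (simp add: poly_slice_poly)

lemma slice_poly_mult: "slice_poly (P * Q) n = slice_poly P n * slice_poly Q n"
  and slice_poly_add: "slice_poly (P + Q) n = slice_poly P n + slice_poly Q n"
  and slice_poly_0: "slice_poly 0 n = 0"
  and slice_poly_1: "slice_poly 1 n = 1"
  and slice_poly_const: "slice_poly [:a:] n = [:a n:]"
  and slice_poly_X: "slice_poly [:0, 1:] n = [:0, 1:]"
  by (simp_all add: poly_eq_poly_eq_iff[symmetric] fun_eq_iff poly_slice_poly_const)

definition l1_norm :: "complex poly \<Rightarrow> real" where
  "l1_norm p = (\<Sum>k\<le>degree p. cmod (coeff p k))"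

lemma l1_norm_eq_sum: "degree p \<le> M \<Longrightarrow> l1_norm p = (\<Sum>k\<le>M. cmod (coeff p k))"
  unfolding l1_norm_def by (rule sum.mono_neutral_left) (auto simp: coeff_eq_0)

lemma l1_norm_nonneg: "0 \<le> l1_norm p"
  unfolding l1_norm_def by (auto intro: sum_nonneg)

lemma l1_norm_const [simp]: "l1_norm [:c:] = cmod c"
  by (simp add: l1_norm_def)

lemma l1_norm_0 [simp]: "l1_norm 0 = 0" and l1_norm_1 [simp]: "l1_norm 1 = 1"
  by (simp_all add: l1_norm_def)

lemma l1_norm_add_le: "l1_norm (p + q) \<le> l1_norm p + l1_norm q"
proof -
  define M where "M = max (degree p) (degree q)"
  have "l1_norm (p + q) = (\<Sum>k\<le>M. cmod (coeff p k + coeff q k))"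
    unfolding M_def by (subst l1_norm_eq_sum[of _ M]) (auto simp: M_def intro: degree_add_le)
  also have "\<dots> \<le> (\<Sum>k\<le>M. cmod (coeff p k) + cmod (coeff q k))"
    by (intro sum_mono norm_triangle_ineq)
  also have "\<dots> = l1_norm p + l1_norm q"
    using l1_norm_eq_sum[of p M] l1_norm_eq_sum[of q M] by (simp add: sum.distrib M_def)
  finally show ?thesis .
qed

lemma l1_norm_smult: "l1_norm (smult c p) = cmod c * l1_norm p"
  using l1_norm_eq_sum[OF degree_smult_le, of c p]
  by (simp add: l1_norm_def norm_mult sum_distrib_left)

lemma l1_norm_pCons: "l1_norm (pCons a p) = cmod a + l1_norm p"
proof -
  have "l1_norm (pCons a p) = (\<Sum>k\<le>Suc (degree p). cmod (coeff (pCons a p) k))"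
    by (rule l1_norm_eq_sum) simp
  then show ?thesis unfolding sum.atMost_Suc_shift by (simp add: l1_norm_def)
qed

lemma l1_norm_mult_le: "l1_norm (p * q) \<le> l1_norm p * l1_norm q"
proof (induction p)
  case (pCons a p)
  have "l1_norm (pCons a p * q) \<le> l1_norm (smult a q) + l1_norm (pCons 0 (p * q))"
    by (simp add: l1_norm_add_le)
  also have "\<dots> \<le> cmod a * l1_norm q + l1_norm p * l1_norm q"
    using pCons.IH by (simp add: l1_norm_smult l1_norm_pCons)
  finally show ?case by (simp add: l1_norm_pCons distrib_right)
qed simp

lemma norm_poly_le_l1_norm: "cmod (poly p w) \<le> l1_norm p * max 1 (cmod w) ^ degree p"
proof -
  have "cmod (poly p w) \<le> (\<Sum>k\<le>degree p. cmod (coeff p k * w ^ k))"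
    unfolding poly_altdef by (rule norm_sum)
  also have "\<dots> \<le> (\<Sum>k\<le>degree p. cmod (coeff p k) * max 1 (cmod w) ^ degree p)"
  proof (intro sum_mono)
    fix k assume "k \<in> {..degree p}"
    then have "cmod w ^ k \<le> max 1 (cmod w) ^ degree p"
      by (meson atMost_iff le_max_iff_disj order.trans order_refl power_increasing power_mono
          norm_ge_zero)
    then show "cmod (coeff p k * w ^ k) \<le> cmod (coeff p k) * max 1 (cmod w) ^ degree p"
      by (simp add: norm_mult norm_power mult_left_mono)
  qed
  also have "\<dots> = l1_norm p * max 1 (cmod w) ^ degree p"
    by (simp add: l1_norm_def sum_distrib_right)
  finally show ?thesis .
qed

corollary norm_poly_le_l1_norm_disc: "cmod w \<le> 1 \<Longrightarrow> cmod (poly p w) \<le> l1_norm p"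
  using norm_poly_le_l1_norm[of p w] by simp


section \<open>Polynomials on the unit circle\<close>

lemma norm_linear_factor_ge:
  assumes w: "cmod w = 1" and \<delta>: "0 < \<delta>" "\<delta> \<le> 1" "\<delta> \<le> cmod (w - z)"
  shows "(\<delta>/3) * (1 + cmod z) \<le> cmod (w - z)"
proof (cases "cmod z \<le> 2")
  case True
  then have "(\<delta>/3) * (1 + cmod z) \<le> \<delta>" using \<delta> by (simp add: field_simps)
  then show ?thesis using \<delta> by linarith
next
  case False
  have "cmod z - 1 \<le> cmod (w - z)" using w by (metis norm_minus_commute norm_triangle_ineq2)
  moreover have "(\<delta>/3) * (1 + cmod z) \<le> (1/3) * (1 + cmod z)"
    using \<delta> by (intro mult_right_mono) auto
  moreover have "(1/3) * (1 + cmod z) \<le> cmod z - 1" using False by simp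
  ultimately show ?thesis by linarith
qed

text \<open>Factor off the roots one at a time: each linear factor has \<open>|w - z| \<ge> \<delta>/3 \<cdot> \<parallel>[:-z, 1:]\<parallel>\<^sub>1\<close>,
  and \<open>\<parallel>\<cdot>\<parallel>\<^sub>1\<close> is submultiplicative.\<close>

lemma norm_poly_ge_far_from_roots:
  assumes w: "cmod w = 1" and \<delta>: "0 < \<delta>" "\<delta> \<le> 1"
  shows "degree p \<le> D \<Longrightarrow> (\<forall>z. poly p z = 0 \<longrightarrow> \<delta> \<le> cmod (w - z)) \<Longrightarrow>
    (\<delta>/3) ^ D * l1_norm p \<le> cmod (poly p w)"
proof (induction D arbitrary: p)
  case 0
  then obtain c where "p = [:c:]" by (metis degree_0_id le_zero_eq)
  then show ?case by simp
next
  case (Suc D)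
  show ?case
  proof (cases "degree p = 0")
    case True
    then obtain c where p: "p = [:c:]" by (metis degree_0_id)
    have "(\<delta>/3) ^ Suc D \<le> 1" using \<delta> by (intro power_le_one) auto
    then have "(\<delta>/3) ^ Suc D * cmod c \<le> cmod c" using \<delta> by (intro mult_left_le_one_le) auto
    then show ?thesis unfolding p by simp
  next
    case False
    then obtain z where z: "poly p z = 0"
      using fundamental_theorem_of_algebra[of p] constant_degree[of p] False by blast
    then obtain q where pq: "p = [:-z, 1:] * q" by (metis dvdE poly_eq_0_iff_dvd)
    have "q \<noteq> 0" using pq False by auto
    then have "degree p = Suc (degree q)" unfolding pq by (subst degree_mult_eq) auto
    then have IH: "(\<delta>/3) ^ D * l1_norm q \<le> cmod (poly q w)"
      using Suc.IH Suc.prems pq by auto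
    have factor: "(\<delta>/3) * (1 + cmod z) \<le> cmod (w - z)"
      using Suc.prems(2) z by (intro norm_linear_factor_ge w \<delta>) auto
    have "l1_norm p \<le> (1 + cmod z) * l1_norm q"
      using l1_norm_mult_le[of "[:-z, 1:]" q] unfolding pq by (simp add: l1_norm_pCons add.commute)
    then have "(\<delta>/3) ^ Suc D * l1_norm p \<le> ((\<delta>/3) * (1 + cmod z)) * ((\<delta>/3) ^ D * l1_norm q)"
      using \<delta> by (simp add: mult_left_mono mult_ac)
    also have "\<dots> \<le> cmod (w - z) * cmod (poly q w)"
      using factor IH \<delta> l1_norm_nonneg[of q] by (intro mult_mono) auto
    also have "\<dots> = cmod (poly p w)" unfolding pq poly_mult norm_mult by simp
    finally show ?thesis .
  qed
qed

text \<open>Normalised Haar measure of the unit circle, in the angle coordinate.\<close>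

definition angle_measure :: "real measure" where
  "angle_measure = uniform_measure lborel {0..2*pi}"

lemma prob_space_angle_measure: "prob_space angle_measure"
  unfolding angle_measure_def by (intro prob_space_uniform_measure) auto

interpretation angle: prob_space angle_measure
  by (rule prob_space_angle_measure)

lemma sets_angle_measure [simp, measurable_cong]: "sets angle_measure = sets borel"
  and space_angle_measure [simp]: "space angle_measure = UNIV"
  unfolding angle_measure_def by simp_all

lemma measure_angle_measure_interval_le:
  assumes "a \<le> b"
  shows "measure angle_measure {a..b} \<le> (b - a) / (2*pi)"
proof -
  have "measure lborel ({0..2*pi} \<inter> {a..b}) \<le> measure lborel {a..b}"
    by (rule measure_mono_fmeasurable) (auto intro: fmeasurable_compact)
  then show ?thesis
    using assms unfolding angle_measure_def by (simp add: measure_uniform_measure divide_right_mono)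
qed

lemma sin_ge_half:
  fixes x :: real
  assumes "0 \<le> x" "x \<le> 1"
  shows "x/2 \<le> sin x"
proof (cases "x = 0")
  case False
  then obtain z where z: "0 < z" "z < x" "sin x - sin 0 = (x - 0) * cos z"
    using assms MVT2[of 0 x sin cos] by (auto intro: DERIV_sin)
  have "cos (pi/3) \<le> cos z"
    using z assms pi_gt3 by (intro cos_monotone_0_pi_le) auto
  then have "x * (1/2) \<le> x * cos z" using assms by (intro mult_left_mono) (auto simp: cos_60)
  then show ?thesis using z by simp
qed simp

lemma abs_diff_le_norm_cis_diff:
  assumes "\<bar>a - b\<bar> \<le> 1"
  shows "\<bar>a - b\<bar> / 2 \<le> cmod (cis a - cis b)"
proof -
  have "cmod (cis a - cis b) = cmod (cis (a - b) - 1)"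
    by (metis cis_divide diff_divide_distrib div_by_1 norm_cis norm_divide right_inverse_eq
        cis_neq_zero)
  moreover have "\<bar>sin (a - b)\<bar> \<le> cmod (cis (a - b) - 1)"
    using abs_Im_le_cmod[of "cis (a - b) - 1"] by simp
  moreover have "\<bar>a - b\<bar> / 2 \<le> \<bar>sin (a - b)\<bar>"
  proof (cases "0 \<le> a - b")
    case False
    have "sin (a - b) = - sin (b - a)" by (metis minus_diff_eq sin_minus)
    then show ?thesis using sin_ge_half[of "b - a"] assms False by auto
  qed (use sin_ge_half[of "a - b"] assms in auto)
  ultimately show ?thesis by linarith
qed

text \<open>Within an arc of length 1 the chord is at least half the arc, so the angles at which \<open>e\<^sup>i\<^sup>t\<close>
  lies within \<open>\<delta>\<close> of \<open>z\<close> span at most \<open>4\<delta>\<close>.\<close>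

lemma measure_unit_interval_angles_near_point:
  assumes "0 < \<delta>"
  shows "measure angle_measure ({a..a + 1} \<inter> {t. cmod (cis t - z) < \<delta>}) \<le> 2 * \<delta>"
proof (cases "{a..a + 1} \<inter> {t. cmod (cis t - z) < \<delta>} = {}")
  case False
  then obtain t0 where t0: "t0 \<in> {a..a + 1}" "cmod (cis t0 - z) < \<delta>" by blast
  have "{a..a + 1} \<inter> {t. cmod (cis t - z) < \<delta>} \<subseteq> {t0 - 4*\<delta>..t0 + 4*\<delta>}"
  proof
    fix t assume t: "t \<in> {a..a + 1} \<inter> {t. cmod (cis t - z) < \<delta>}"
    have "\<bar>t - t0\<bar> / 2 \<le> cmod (cis t - cis t0)"
      using t t0 by (intro abs_diff_le_norm_cis_diff) auto
    also have "\<dots> \<le> cmod (cis t - z) + cmod (cis t0 - z)"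
      by (rule norm_diff_triangle_le[of _ z]) (simp_all add: norm_minus_commute)
    also have "\<dots> < 2 * \<delta>" using t t0 by auto
    finally show "t \<in> {t0 - 4*\<delta>..t0 + 4*\<delta>}" by auto
  qed
  then have "measure angle_measure ({a..a + 1} \<inter> {t. cmod (cis t - z) < \<delta>})
      \<le> measure angle_measure {t0 - 4*\<delta>..t0 + 4*\<delta>}"
    by (intro angle.finite_measure_mono) auto
  also have "\<dots> \<le> (8 * \<delta>) / (2*pi)"
    using measure_angle_measure_interval_le[of "t0 - 4*\<delta>" "t0 + 4*\<delta>"] assms by simp
  also have "\<dots> \<le> 2 * \<delta>" using assms pi_gt3 by (simp add: field_simps)
  finally show ?thesis .
qed (use assms in simp)

lemma measure_angles_near_point:
  assumes "0 < \<delta>"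
  shows "measure angle_measure {t. cmod (cis t - z) < \<delta>} \<le> 16 * \<delta>"
proof -
  define S where "S = {t. cmod (cis t - z) < \<delta>}"
  have "open S" unfolding S_def by (intro open_Collect_less continuous_intros)
  then have S: "S \<in> sets angle_measure" by simp
  define T where "T j = {real j..real j + 1} \<inter> S" for j :: nat
  have T: "T j \<in> sets angle_measure" for j unfolding T_def using S by auto
  have cover: "{0..2*pi} \<inter> S \<subseteq> (\<Union>j<8. T j)"
  proof
    fix x assume x: "x \<in> {0..2*pi} \<inter> S"
    then have "nat \<lfloor>x\<rfloor> < 8" using pi_less_4 by (simp add: nat_less_iff floor_less_iff)
    moreover have "x \<in> T (nat \<lfloor>x\<rfloor>)" unfolding T_def using x by auto
    ultimately show "x \<in> (\<Union>j<8. T j)" by blast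
  qed
  have "measure angle_measure S = measure angle_measure ({0..2*pi} \<inter> S)"
    using S unfolding angle_measure_def by (simp add: measure_uniform_measure Int_assoc)
  also have "\<dots> \<le> measure angle_measure (\<Union>j<8. T j)"
    using cover T by (intro angle.finite_measure_mono) auto
  also have "\<dots> \<le> (\<Sum>j<8. measure angle_measure (T j))"
    using T by (intro measure_UNION_le) auto
  also have "\<dots> \<le> (\<Sum>j<(8::nat). 2 * \<delta>)"
    unfolding T_def S_def by (intro sum_mono measure_unit_interval_angles_near_point assms)
  finally show ?thesis unfolding S_def by simp
qed

definition small_angles :: "real \<Rightarrow> complex poly \<Rightarrow> real set" where
  "small_angles c p = {t. cmod (poly p (cis t)) < c * l1_norm p}"

lemma small_angles_sets [simp]: "small_angles c p \<in> sets borel"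
  unfolding small_angles_def by (simp add: open_Collect_less continuous_intros borel_open)

lemma measure_small_angles_le:
  assumes "degree p \<le> D" "0 < \<delta>" "\<delta> \<le> 1"
  shows "measure angle_measure (small_angles ((\<delta>/3)^D) p) \<le> 16 * D * \<delta>"
proof (cases "p = 0")
  case False
  define R where "R = {z. poly p z = 0}"
  have "finite R" unfolding R_def using False poly_roots_finite by blast
  have "card R \<le> D" unfolding R_def using card_poly_roots_bound[OF False] assms by simp
  define B where "B z = {t. cmod (cis t - z) < \<delta>}" for z
  have B: "B z \<in> sets angle_measure" for z
    unfolding B_def by (simp add: open_Collect_less continuous_intros borel_open)
  have "small_angles ((\<delta>/3)^D) p \<subseteq> (\<Union>z\<in>R. B z)"
    using norm_poly_ge_far_from_roots[of "cis _" \<delta> p D] assms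
    unfolding small_angles_def R_def B_def by (force simp: not_less)
  then have "measure angle_measure (small_angles ((\<delta>/3)^D) p) \<le> measure angle_measure (\<Union>z\<in>R. B z)"
    using B \<open>finite R\<close> by (intro angle.finite_measure_mono) auto
  also have "\<dots> \<le> (\<Sum>z\<in>R. measure angle_measure (B z))"
    using B \<open>finite R\<close> by (intro measure_UNION_le) auto
  also have "\<dots> \<le> card R * (16 * \<delta>)"
    using sum_mono[of R "\<lambda>z. measure angle_measure (B z)" "\<lambda>_. 16 * \<delta>"]
      measure_angles_near_point[OF assms(2)] unfolding B_def by simp
  also have "\<dots> \<le> D * (16 * \<delta>)" using \<open>card R \<le> D\<close> assms by (intro mult_right_mono) auto
  finally show ?thesis by simp
qed (use assms in \<open>simp add: small_angles_def\<close>)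

text \<open>This is \<open>(\<delta>/3)\<^sup>D\<close> for \<open>\<delta> = 1/(40(D + 1))\<close>, for which two sets of small angles have total
  measure below 1.\<close>

definition circle_bound_const :: "nat \<Rightarrow> real" where
  "circle_bound_const D = (1 / (120 * (real D + 1))) ^ D"

lemma circle_bound_const_pos: "0 < circle_bound_const D"
  unfolding circle_bound_const_def by simp

lemma exists_angle_polys_large:
  assumes "degree p \<le> D" "degree q \<le> D"
  obtains t where "circle_bound_const D * l1_norm p \<le> cmod (poly p (cis t))"
    and "circle_bound_const D * l1_norm q \<le> cmod (poly q (cis t))"
proof -
  define \<delta> where "\<delta> = 1 / (40 * (real D + 1))"
  have \<delta>: "0 < \<delta>" "\<delta> \<le> 1" unfolding \<delta>_def by (auto simp: field_simps)
  have c: "circle_bound_const D = (\<delta>/3)^D" unfolding circle_bound_const_def \<delta>_def by simp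
  let ?small = "small_angles ((\<delta>/3)^D)"
  have "measure angle_measure (?small p \<union> ?small q) \<le>
      measure angle_measure (?small p) + measure angle_measure (?small q)"
    by (intro measure_Un_le) auto
  also have "\<dots> \<le> 16 * D * \<delta> + 16 * D * \<delta>"
    using measure_small_angles_le assms \<delta> by (intro add_mono) auto
  also have "\<dots> = 32 * real D / (40 * (real D + 1))" unfolding \<delta>_def by simp
  also have "\<dots> < 1" by (subst divide_less_eq_1_pos) auto
  finally have "?small p \<union> ?small q \<noteq> UNIV" using angle.prob_space by auto
  then obtain t where "t \<notin> ?small p" "t \<notin> ?small q" by auto
  then show ?thesis using that unfolding small_angles_def c by (simp add: not_less)
qed


lemma l1_norm_mult_ge:
  assumes "degree p \<le> D" "degree q \<le> D"
  shows "(circle_bound_const D)\<^sup>2 * (l1_norm p * l1_norm q) \<le> l1_norm (p * q)"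
proof -
  obtain t where t: "circle_bound_const D * l1_norm p \<le> cmod (poly p (cis t))"
    "circle_bound_const D * l1_norm q \<le> cmod (poly q (cis t))"
    using exists_angle_polys_large[OF assms] by blast
  have "(circle_bound_const D)\<^sup>2 * (l1_norm p * l1_norm q) =
      (circle_bound_const D * l1_norm p) * (circle_bound_const D * l1_norm q)"
    by (simp add: power2_eq_square)
  also have "\<dots> \<le> cmod (poly p (cis t)) * cmod (poly q (cis t))"
    using t circle_bound_const_pos[of D] l1_norm_nonneg[of q] by (intro mult_mono) auto
  also have "\<dots> = cmod (poly (p * q) (cis t))" by (simp add: norm_mult)
  also have "\<dots> \<le> l1_norm (p * q)" by (rule norm_poly_le_l1_norm_disc) simp
  finally show ?thesis .
qed


section \<open>The Banach ring \<open>A\<^sup>\<epsilon>\<close> and the seminorms \<open>|\<cdot>|\<^sub>\<omega>\<close>\<close>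

lemma norm_powr_le_normA: "a \<in> Aeps \<epsilon> \<Longrightarrow> cmod (a n) powr \<epsilon> n \<le> normA \<epsilon> a"
  unfolding Aeps_def normA_def by (auto intro: cSUP_upper)

lemma normA_nonneg: "a \<in> Aeps \<epsilon> \<Longrightarrow> 0 \<le> normA \<epsilon> a"
  by (rule order.trans[OF powr_ge_zero norm_powr_le_normA])

lemma AepsI: "(\<And>n. cmod (a n) powr \<epsilon> n \<le> B) \<Longrightarrow> a \<in> Aeps \<epsilon>"
  unfolding Aeps_def by (auto simp: bdd_above_def)

lemma Apoly_pCons: "pCons a p \<in> Apoly \<epsilon> \<longleftrightarrow> a \<in> Aeps \<epsilon> \<and> p \<in> Apoly \<epsilon>"
proof
  assume "pCons a p \<in> Apoly \<epsilon>"
  then have "coeff (pCons a p) k \<in> Aeps \<epsilon>" for k unfolding Apoly_def by blast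
  from this[of 0] this[of "Suc _"] show "a \<in> Aeps \<epsilon> \<and> p \<in> Apoly \<epsilon>"
    unfolding Apoly_def by simp
next
  assume "a \<in> Aeps \<epsilon> \<and> p \<in> Apoly \<epsilon>"
  then show "pCons a p \<in> Apoly \<epsilon>" unfolding Apoly_def by (auto simp: coeff_pCons split: nat.split)
qed

lemma coeff_in_Aeps: "P \<in> Apoly \<epsilon> \<Longrightarrow> coeff P k \<in> Aeps \<epsilon>"
  unfolding Apoly_def by auto

lemma absw_principal: "absw \<epsilon> (principal {n}) a = cmod (a n) powr \<epsilon> n"
  unfolding absw_def by (rule Lim_principal_singleton)

locale exponent_sequence =
  fixes \<epsilon> :: "nat \<Rightarrow> real"
  assumes exponent_bounds: "\<forall>n. 0 < \<epsilon> n \<and> \<epsilon> n \<le> 1"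
begin

lemma eps_pos: "0 < \<epsilon> n" and eps_le_1: "\<epsilon> n \<le> 1"
  using exponent_bounds by auto

lemma norm_add_powr_le: "cmod (a + b) powr \<epsilon> n \<le> cmod a powr \<epsilon> n + cmod b powr \<epsilon> n"
proof -
  have "cmod (a + b) powr \<epsilon> n \<le> (cmod a + cmod b) powr \<epsilon> n"
    using eps_pos[of n] by (intro powr_mono2 norm_triangle_ineq) auto
  also have "\<dots> \<le> cmod a powr \<epsilon> n + cmod b powr \<epsilon> n"
    using eps_pos[of n] eps_le_1[of n] by (intro powr_add_le) auto
  finally show ?thesis .
qed

lemma Aeps_add:
  assumes "a \<in> Aeps \<epsilon>" "b \<in> Aeps \<epsilon>"
  shows "a + b \<in> Aeps \<epsilon>"
proof (rule AepsI)
  fix n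
  have "cmod ((a + b) n) powr \<epsilon> n \<le> cmod (a n) powr \<epsilon> n + cmod (b n) powr \<epsilon> n"
    using norm_add_powr_le by simp
  also have "\<dots> \<le> normA \<epsilon> a + normA \<epsilon> b" using assms by (intro add_mono norm_powr_le_normA)
  finally show "cmod ((a + b) n) powr \<epsilon> n \<le> normA \<epsilon> a + normA \<epsilon> b" .
qed

lemma Aeps_mult:
  assumes "a \<in> Aeps \<epsilon>" "b \<in> Aeps \<epsilon>"
  shows "a * b \<in> Aeps \<epsilon>"
proof (rule AepsI)
  fix n
  have "cmod ((a * b) n) powr \<epsilon> n = cmod (a n) powr \<epsilon> n * cmod (b n) powr \<epsilon> n"
    by (simp add: norm_mult powr_mult)
  also have "\<dots> \<le> normA \<epsilon> a * normA \<epsilon> b"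
    using assms by (intro mult_mono norm_powr_le_normA normA_nonneg) auto
  finally show "cmod ((a * b) n) powr \<epsilon> n \<le> normA \<epsilon> a * normA \<epsilon> b" .
qed

lemma Aeps_const: "(\<lambda>_. c) \<in> Aeps \<epsilon>"
proof (rule AepsI)
  fix n
  show "cmod c powr \<epsilon> n \<le> max 1 (cmod c)"
    using powr_le1[of "\<epsilon> n" "cmod c"] powr_mono[of "\<epsilon> n" 1 "cmod c"] eps_pos[of n] eps_le_1[of n]
    by (cases "cmod c \<le> 1") auto
qed

lemma Aeps_0: "0 \<in> Aeps \<epsilon>" and Aeps_1: "1 \<in> Aeps \<epsilon>"
  using Aeps_const[of 0] Aeps_const[of 1] by (simp_all add: zero_fun_def one_fun_def)

lemma Aeps_sum: "finite I \<Longrightarrow> (\<And>i. i \<in> I \<Longrightarrow> f i \<in> Aeps \<epsilon>) \<Longrightarrow> sum f I \<in> Aeps \<epsilon>"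
  by (induction I rule: finite_induct) (auto intro: Aeps_add Aeps_0)

lemma Apoly_0: "0 \<in> Apoly \<epsilon>"
  unfolding Apoly_def using Aeps_0 by simp

lemma Apoly_const: "[:a:] \<in> Apoly \<epsilon> \<longleftrightarrow> a \<in> Aeps \<epsilon>"
  by (simp add: Apoly_pCons Apoly_0)

lemma Apoly_1: "1 \<in> Apoly \<epsilon>" and Apoly_X: "[:0, 1:] \<in> Apoly \<epsilon>"
  by (simp_all add: one_pCons Apoly_pCons Apoly_0 Aeps_0 Aeps_1)

lemma Apoly_add: "P \<in> Apoly \<epsilon> \<Longrightarrow> Q \<in> Apoly \<epsilon> \<Longrightarrow> P + Q \<in> Apoly \<epsilon>"
  unfolding Apoly_def by (auto intro: Aeps_add)

lemma Apoly_mult: "P \<in> Apoly \<epsilon> \<Longrightarrow> Q \<in> Apoly \<epsilon> \<Longrightarrow> P * Q \<in> Apoly \<epsilon>"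
  unfolding Apoly_def by (auto simp: coeff_mult intro!: Aeps_sum Aeps_mult)

lemma poly_in_Aeps: "P \<in> Apoly \<epsilon> \<Longrightarrow> z \<in> Aeps \<epsilon> \<Longrightarrow> poly P z \<in> Aeps \<epsilon>"
  by (induction P) (auto simp: Apoly_pCons Aeps_0 intro: Aeps_add Aeps_mult)

lemma tendsto_absw:
  "ultrafilter_on_nat \<omega> \<Longrightarrow> a \<in> Aeps \<epsilon> \<Longrightarrow> ((\<lambda>n. cmod (a n) powr \<epsilon> n) \<longlongrightarrow> absw \<epsilon> \<omega> a) \<omega>"
  unfolding absw_def
  by (rule tendsto_Lim_ultrafilter_on_nat[where a = 0 and b = "normA \<epsilon> a"])
    (auto intro: norm_powr_le_normA)

lemma absw_eqI:
  "ultrafilter_on_nat \<omega> \<Longrightarrow> a \<in> Aeps \<epsilon> \<Longrightarrow> ((\<lambda>n. cmod (a n) powr \<epsilon> n) \<longlongrightarrow> c) \<omega> \<Longrightarrow>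
    absw \<epsilon> \<omega> a = c"
  using ultrafilter_tendsto_unique tendsto_absw by blast

lemma absw_nonneg: "ultrafilter_on_nat \<omega> \<Longrightarrow> a \<in> Aeps \<epsilon> \<Longrightarrow> 0 \<le> absw \<epsilon> \<omega> a"
  using ultrafilter_tendsto_le[OF _ tendsto_const tendsto_absw] by auto

lemma absw_le_normA: "ultrafilter_on_nat \<omega> \<Longrightarrow> a \<in> Aeps \<epsilon> \<Longrightarrow> absw \<epsilon> \<omega> a \<le> normA \<epsilon> a"
  using ultrafilter_tendsto_le[OF _ tendsto_absw tendsto_const] norm_powr_le_normA by auto

lemma absw_add:
  assumes "ultrafilter_on_nat \<omega>" "a \<in> Aeps \<epsilon>" "b \<in> Aeps \<epsilon>"
  shows "absw \<epsilon> \<omega> (a + b) \<le> absw \<epsilon> \<omega> a + absw \<epsilon> \<omega> b"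
  using assms norm_add_powr_le
  by (intro ultrafilter_tendsto_le[OF _ tendsto_absw tendsto_add[OF tendsto_absw tendsto_absw]])
    (auto intro: Aeps_add)

lemma absw_mult:
  assumes "ultrafilter_on_nat \<omega>" "a \<in> Aeps \<epsilon>" "b \<in> Aeps \<epsilon>"
  shows "absw \<epsilon> \<omega> (a * b) = absw \<epsilon> \<omega> a * absw \<epsilon> \<omega> b"
  using assms tendsto_mult[OF tendsto_absw tendsto_absw]
  by (intro absw_eqI) (auto simp: norm_mult powr_mult intro: Aeps_mult)

lemma absw_const:
  "ultrafilter_on_nat \<omega> \<Longrightarrow> ((\<lambda>n. cmod c powr \<epsilon> n) \<longlongrightarrow> absw \<epsilon> \<omega> (\<lambda>_. c)) \<omega>"
  using tendsto_absw[OF _ Aeps_const] by simp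

lemma absw_const_norm_1: "ultrafilter_on_nat \<omega> \<Longrightarrow> cmod c = 1 \<Longrightarrow> absw \<epsilon> \<omega> (\<lambda>_. c) = 1"
  using absw_eqI[OF _ Aeps_const] by simp

lemma evalpt_in_Disc:
  assumes U: "ultrafilter_on_nat \<omega>" and z: "z \<in> Aeps \<epsilon>" "absw \<epsilon> \<omega> z \<le> 1"
  shows "evalpt \<epsilon> \<omega> z \<in> Disc \<epsilon>"
proof -
  let ?x = "evalpt \<epsilon> \<omega> z"
  have in_A: "P \<in> Apoly \<epsilon> \<Longrightarrow> poly P z \<in> Aeps \<epsilon>" for P
    using poly_in_Aeps z by auto
  have "?x \<in> Berk_A1 \<epsilon>" unfolding Berk_A1_def
  proof (intro CollectI conjI ballI allI impI)
    show "?x 0 = 0" "?x 1 = 1"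
      using absw_const_norm_1[OF U, of 1] absw_eqI[OF U Aeps_0] Apoly_0 Apoly_1
      by (simp_all add: evalpt_def zero_fun_def one_fun_def)
  next
    fix P Q assume "P \<in> Apoly \<epsilon>" "Q \<in> Apoly \<epsilon>"
    then show "?x (P + Q) \<le> ?x P + ?x Q" "?x (P * Q) = ?x P * ?x Q"
      using absw_add[OF U in_A in_A] absw_mult[OF U in_A in_A] Apoly_add Apoly_mult
      by (simp_all add: evalpt_def)
  qed (use U in_A in \<open>auto simp: evalpt_def Apoly_const absw_nonneg absw_le_normA\<close>)
  moreover have "?x [:0, 1:] \<le> 1" using Apoly_X z by (simp add: evalpt_def)
  ultimately show ?thesis unfolding Disc_def by simp
qed

abbreviation evalc :: "nat filter \<Rightarrow> complex \<Rightarrow> seminorm" where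
  "evalc \<omega> w \<equiv> evalpt \<epsilon> \<omega> (\<lambda>_. w)"

lemma evalc_in_Disc: "ultrafilter_on_nat \<omega> \<Longrightarrow> cmod w = 1 \<Longrightarrow> evalc \<omega> w \<in> Disc \<epsilon>"
  by (intro evalpt_in_Disc Aeps_const) (simp_all add: absw_const_norm_1)

lemma evalc_principal:
  "P \<in> Apoly \<epsilon> \<Longrightarrow> evalc (principal {n}) w P = cmod (poly (slice_poly P n) w) powr \<epsilon> n"
  by (simp add: evalpt_def absw_principal poly_slice_poly_const)

lemma tendsto_evalc:
  assumes "ultrafilter_on_nat \<omega>"
  shows "((\<lambda>n. evalc (principal {n}) w P) \<longlongrightarrow> evalc \<omega> w P) \<omega>"
proof (cases "P \<in> Apoly \<epsilon>")
  case True
  then show ?thesis using tendsto_absw[OF assms poly_in_Aeps[OF True Aeps_const]]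
    by (simp add: evalpt_def absw_principal)
qed (simp add: evalpt_def)


lemma archimedean_at_principal: "archimedean_at \<epsilon> (principal {n})"
  unfolding archimedean_at_def absw_principal using eps_pos[of n] by (simp add: gr_one_powr)

lemma tendsto_two_powr_eps: "ultrafilter_on_nat \<omega> \<Longrightarrow> ((\<lambda>n. 2 powr \<epsilon> n) \<longlongrightarrow> absw \<epsilon> \<omega> (\<lambda>_. 2)) \<omega>"
  using absw_const[of \<omega> 2] by simp

lemma eps_tendsto_0_non_archimedean:
  assumes U: "ultrafilter_on_nat \<omega>" and na: "\<not> archimedean_at \<epsilon> \<omega>"
  shows "(\<epsilon> \<longlongrightarrow> 0) \<omega>"
proof -
  have "1 \<le> absw \<epsilon> \<omega> (\<lambda>_. 2)"
    using eps_pos less_imp_le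
    by (intro ultrafilter_tendsto_le[OF U tendsto_const tendsto_two_powr_eps[OF U]]
        always_eventually allI ge_one_powr_ge_zero) auto
  then have "absw \<epsilon> \<omega> (\<lambda>_. 2) = 1" using na unfolding archimedean_at_def by simp
  then have "((\<lambda>n. log 2 (2 powr \<epsilon> n)) \<longlongrightarrow> log 2 1) \<omega>"
    using tendsto_two_powr_eps[OF U] by (intro tendsto_log) auto
  then show ?thesis by simp
qed

lemma powr_eps_tendsto_1_non_archimedean:
  assumes "ultrafilter_on_nat \<omega>" "\<not> archimedean_at \<epsilon> \<omega>" "0 < c"
  shows "((\<lambda>n. c powr \<epsilon> n) \<longlongrightarrow> 1) \<omega>"
  using tendsto_powr[OF tendsto_const eps_tendsto_0_non_archimedean[OF assms(1,2)], of c] assms(3)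
  by simp

lemma eps_bounded_below_archimedean:
  assumes U: "ultrafilter_on_nat \<omega>" and ar: "archimedean_at \<epsilon> \<omega>"
  obtains e where "0 < e" "eventually (\<lambda>n. e \<le> \<epsilon> n) \<omega>"
proof -
  define m where "m = (1 + absw \<epsilon> \<omega> (\<lambda>_. 2)) / 2"
  have m: "1 < m" "m < absw \<epsilon> \<omega> (\<lambda>_. 2)" using ar unfolding m_def archimedean_at_def by auto
  have "eventually (\<lambda>n. m < 2 powr \<epsilon> n) \<omega>"
    using order_tendstoD(1)[OF tendsto_two_powr_eps[OF U] m(2)] .
  then have "eventually (\<lambda>n. log 2 m \<le> \<epsilon> n) \<omega>"
  proof (rule eventually_mono)
    fix n assume "m < 2 powr \<epsilon> n"
    then have "log 2 m < log 2 (2 powr \<epsilon> n)" using m by (subst log_less_cancel_iff) auto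
    then show "log 2 m \<le> \<epsilon> n" by simp
  qed
  moreover have "0 < log 2 m" using m by simp
  ultimately show ?thesis using that by blast
qed

end


section \<open>The Gauss point of a non-Archimedean fibre\<close>

context exponent_sequence
begin

definition coeff_norm_bound :: "seq poly \<Rightarrow> real" where
  "coeff_norm_bound P = (if P \<in> Apoly \<epsilon> then (\<Sum>k\<le>degree P. normA \<epsilon> (coeff P k)) else 0)"

lemma l1_norm_slice_powr_le:
  assumes "P \<in> Apoly \<epsilon>"
  shows "l1_norm (slice_poly P n) powr \<epsilon> n \<le> coeff_norm_bound P"
proof -
  have "l1_norm (slice_poly P n) = (\<Sum>k\<le>degree P. cmod (coeff P k n))"
    by (simp add: l1_norm_eq_sum[OF degree_slice_poly_le] coeff_slice_poly)
  then have "l1_norm (slice_poly P n) powr \<epsilon> n \<le> (\<Sum>k\<le>degree P. cmod (coeff P k n) powr \<epsilon> n)"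
    using eps_pos[of n] eps_le_1[of n] by (simp add: powr_sum_le)
  also have "\<dots> \<le> coeff_norm_bound P"
    unfolding coeff_norm_bound_def using assms
    by (auto intro!: sum_mono norm_powr_le_normA coeff_in_Aeps)
  finally show ?thesis .
qed

definition gauss_limit :: "nat filter \<Rightarrow> seq poly \<Rightarrow> real" where
  "gauss_limit \<omega> P = Lim \<omega> (\<lambda>n. l1_norm (slice_poly P n) powr \<epsilon> n)"

lemma tendsto_gauss_limit:
  "ultrafilter_on_nat \<omega> \<Longrightarrow> P \<in> Apoly \<epsilon> \<Longrightarrow>
    ((\<lambda>n. l1_norm (slice_poly P n) powr \<epsilon> n) \<longlongrightarrow> gauss_limit \<omega> P) \<omega>"
  unfolding gauss_limit_def
  by (rule tendsto_Lim_ultrafilter_on_nat[where a = 0 and b = "coeff_norm_bound P"])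
    (auto intro: l1_norm_slice_powr_le)

lemma gauss_limit_eqI:
  "ultrafilter_on_nat \<omega> \<Longrightarrow> P \<in> Apoly \<epsilon> \<Longrightarrow>
    ((\<lambda>n. l1_norm (slice_poly P n) powr \<epsilon> n) \<longlongrightarrow> c) \<omega> \<Longrightarrow> gauss_limit \<omega> P = c"
  using ultrafilter_tendsto_unique tendsto_gauss_limit by blast

lemma gauss_limit_bounds:
  "ultrafilter_on_nat \<omega> \<Longrightarrow> P \<in> Apoly \<epsilon> \<Longrightarrow> 0 \<le> gauss_limit \<omega> P"
  "ultrafilter_on_nat \<omega> \<Longrightarrow> P \<in> Apoly \<epsilon> \<Longrightarrow> gauss_limit \<omega> P \<le> coeff_norm_bound P"
  using ultrafilter_tendsto_le[OF _ tendsto_const tendsto_gauss_limit]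
    ultrafilter_tendsto_le[OF _ tendsto_gauss_limit tendsto_const] l1_norm_slice_powr_le
  by auto

lemma gauss_limit_add_le:
  assumes U: "ultrafilter_on_nat \<omega>" and P: "P \<in> Apoly \<epsilon>" and Q: "Q \<in> Apoly \<epsilon>"
  shows "gauss_limit \<omega> (P + Q) \<le> gauss_limit \<omega> P + gauss_limit \<omega> Q"
proof (rule ultrafilter_tendsto_le[OF U tendsto_gauss_limit[OF U Apoly_add[OF P Q]]
      tendsto_add[OF tendsto_gauss_limit[OF U P] tendsto_gauss_limit[OF U Q]]],
    intro always_eventually allI)
  fix n
  let ?p = "slice_poly P n" and ?q = "slice_poly Q n"
  have "l1_norm (?p + ?q) powr \<epsilon> n \<le> (l1_norm ?p + l1_norm ?q) powr \<epsilon> n"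
    using eps_pos[of n] l1_norm_nonneg by (intro powr_mono2 l1_norm_add_le) auto
  also have "\<dots> \<le> l1_norm ?p powr \<epsilon> n + l1_norm ?q powr \<epsilon> n"
    using eps_pos[of n] eps_le_1[of n] l1_norm_nonneg by (intro powr_add_le) auto
  finally show "l1_norm (slice_poly (P + Q) n) powr \<epsilon> n \<le>
      l1_norm ?p powr \<epsilon> n + l1_norm ?q powr \<epsilon> n" by (simp add: slice_poly_add)
qed

text \<open>Multiplicativity holds only up to the factor \<open>c\<^sup>\<epsilon>\<^sup>n\<close>, where \<open>c\<close> comes from a common angle
  at which both factors are large; this factor disappears in the limit since \<open>\<epsilon>\<^sub>n \<rightarrow> 0\<close>.\<close>

lemma gauss_limit_mult:
  assumes U: "ultrafilter_on_nat \<omega>" and na: "\<not> archimedean_at \<epsilon> \<omega>"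
    and P: "P \<in> Apoly \<epsilon>" and Q: "Q \<in> Apoly \<epsilon>"
  shows "gauss_limit \<omega> (P * Q) = gauss_limit \<omega> P * gauss_limit \<omega> Q"
proof (rule antisym)
  have PQ: "P * Q \<in> Apoly \<epsilon>" using Apoly_mult[OF P Q] .
  let ?p = "\<lambda>n. slice_poly P n" and ?q = "\<lambda>n. slice_poly Q n"
  show "gauss_limit \<omega> (P * Q) \<le> gauss_limit \<omega> P * gauss_limit \<omega> Q"
  proof (rule ultrafilter_tendsto_le[OF U tendsto_gauss_limit[OF U PQ]
        tendsto_mult[OF tendsto_gauss_limit[OF U P] tendsto_gauss_limit[OF U Q]]],
      intro always_eventually allI)
    fix n
    have "l1_norm (?p n * ?q n) powr \<epsilon> n \<le> (l1_norm (?p n) * l1_norm (?q n)) powr \<epsilon> n"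
      using eps_pos[of n] l1_norm_nonneg by (intro powr_mono2 l1_norm_mult_le) auto
    then show "l1_norm (slice_poly (P * Q) n) powr \<epsilon> n \<le>
        l1_norm (?p n) powr \<epsilon> n * l1_norm (?q n) powr \<epsilon> n"
      using l1_norm_nonneg by (simp add: slice_poly_mult powr_mult)
  qed
  define c where "c = (circle_bound_const (max (degree P) (degree Q)))\<^sup>2"
  have c: "0 < c"
    unfolding c_def using circle_bound_const_pos[of "max (degree P) (degree Q)"] by simp
  have "c * (l1_norm (?p n) * l1_norm (?q n)) \<le> l1_norm (slice_poly (P * Q) n)" for n
    unfolding c_def slice_poly_mult
    using degree_slice_poly_le[of P n] degree_slice_poly_le[of Q n]
    by (intro l1_norm_mult_ge) auto
  then have "eventually (\<lambda>n. c powr \<epsilon> n * (l1_norm (?p n) powr \<epsilon> n * l1_norm (?q n) powr \<epsilon> n)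
      \<le> l1_norm (slice_poly (P * Q) n) powr \<epsilon> n) \<omega>"
    using c l1_norm_nonneg eps_pos
    by (intro always_eventually allI) (simp add: powr_mult[symmetric] powr_mono2 less_imp_le)
  moreover have "((\<lambda>n. c powr \<epsilon> n * (l1_norm (?p n) powr \<epsilon> n * l1_norm (?q n) powr \<epsilon> n))
      \<longlongrightarrow> 1 * (gauss_limit \<omega> P * gauss_limit \<omega> Q)) \<omega>"
    by (intro tendsto_mult powr_eps_tendsto_1_non_archimedean U na c tendsto_gauss_limit P Q)
  ultimately show "gauss_limit \<omega> P * gauss_limit \<omega> Q \<le> gauss_limit \<omega> (P * Q)"
    using ultrafilter_tendsto_le[OF U _ tendsto_gauss_limit[OF U PQ]] by simp
qed

lemma gauss_limit_in_Disc:
  assumes U: "ultrafilter_on_nat \<omega>" and na: "\<not> archimedean_at \<epsilon> \<omega>"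
  shows "(\<lambda>P. if P \<in> Apoly \<epsilon> then gauss_limit \<omega> P else 0) \<in> Disc \<epsilon>"
proof -
  have const: "gauss_limit \<omega> [:a:] = absw \<epsilon> \<omega> a" if "a \<in> Aeps \<epsilon>" for a
    using that tendsto_absw[OF U that] Apoly_const
    by (intro gauss_limit_eqI[OF U]) (simp_all add: slice_poly_const)
  have "gauss_limit \<omega> 0 = 0" "gauss_limit \<omega> 1 = 1" "gauss_limit \<omega> [:0, 1:] = 1"
    using gauss_limit_eqI[OF U Apoly_0] gauss_limit_eqI[OF U Apoly_1] gauss_limit_eqI[OF U Apoly_X]
    by (simp_all add: slice_poly_0 slice_poly_1 slice_poly_X l1_norm_pCons)
  moreover have "gauss_limit \<omega> (P + Q) \<le> gauss_limit \<omega> P + gauss_limit \<omega> Q"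
    "gauss_limit \<omega> (P * Q) = gauss_limit \<omega> P * gauss_limit \<omega> Q"
    if "P \<in> Apoly \<epsilon>" "Q \<in> Apoly \<epsilon>" for P Q
    using that gauss_limit_add_le[OF U] gauss_limit_mult[OF U na] by auto
  ultimately show ?thesis
    unfolding Disc_def Berk_A1_def
    using U Apoly_0 Apoly_1 Apoly_X Apoly_add Apoly_mult
    by (auto simp: Apoly_const const gauss_limit_bounds absw_le_normA)
qed

lemma absw_poly_le_gauss_limit:
  assumes U: "ultrafilter_on_nat \<omega>" and P: "P \<in> Apoly \<epsilon>"
    and z: "z \<in> Aeps \<epsilon>" "absw \<epsilon> \<omega> z \<le> 1"
  shows "absw \<epsilon> \<omega> (poly P z) \<le> gauss_limit \<omega> P"
proof -
  let ?D = "degree P"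
  have "cmod (poly (slice_poly P n) (z n)) powr \<epsilon> n \<le>
      l1_norm (slice_poly P n) powr \<epsilon> n * (max 1 (cmod (z n) powr \<epsilon> n)) ^ ?D" for n
  proof -
    have "cmod (poly (slice_poly P n) (z n)) \<le> l1_norm (slice_poly P n) * max 1 (cmod (z n)) ^ ?D"
      using norm_poly_le_l1_norm[of "slice_poly P n" "z n"] degree_slice_poly_le[of P n]
        l1_norm_nonneg[of "slice_poly P n"]
      by (meson le_max_iff_disj mult_left_mono order_trans power_increasing order_refl)
    then have "cmod (poly (slice_poly P n) (z n)) powr \<epsilon> n \<le>
        (l1_norm (slice_poly P n) * max 1 (cmod (z n)) ^ ?D) powr \<epsilon> n"
      using eps_pos[of n] by (intro powr_mono2) auto
    also have "\<dots> = l1_norm (slice_poly P n) powr \<epsilon> n * (max 1 (cmod (z n) powr \<epsilon> n)) ^ ?D"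
      using l1_norm_nonneg eps_pos[of n] by (simp add: powr_mult power_powr_commute max_one_powr)
    finally show ?thesis .
  qed
  moreover have "((\<lambda>n. l1_norm (slice_poly P n) powr \<epsilon> n * (max 1 (cmod (z n) powr \<epsilon> n)) ^ ?D)
      \<longlongrightarrow> gauss_limit \<omega> P * (max 1 (absw \<epsilon> \<omega> z)) ^ ?D) \<omega>"
    by (intro tendsto_intros tendsto_gauss_limit tendsto_absw U P z)
  ultimately have "absw \<epsilon> \<omega> (poly P z) \<le> gauss_limit \<omega> P * (max 1 (absw \<epsilon> \<omega> z)) ^ ?D"
    using tendsto_absw[OF U poly_in_Aeps[OF P z(1)]]
    by (intro ultrafilter_tendsto_le[OF U]) (auto simp: poly_slice_poly)
  then show ?thesis using z(2) by simp
qed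

lemma gauss_limit_le_absw_poly:
  assumes U: "ultrafilter_on_nat \<omega>" and na: "\<not> archimedean_at \<epsilon> \<omega>" and P: "P \<in> Apoly \<epsilon>"
  obtains z where "z \<in> Aeps \<epsilon>" "absw \<epsilon> \<omega> z = 1" "gauss_limit \<omega> P \<le> absw \<epsilon> \<omega> (poly P z)"
proof -
  define c where "c = circle_bound_const (degree P)"
  have c: "0 < c" unfolding c_def by (rule circle_bound_const_pos)
  have "\<exists>t. c * l1_norm (slice_poly P n) \<le> cmod (poly (slice_poly P n) (cis t))" for n
    using exists_angle_polys_large[of "slice_poly P n" "degree P" "slice_poly P n"]
      degree_slice_poly_le[of P n] unfolding c_def by blast
  then obtain t where t: "c * l1_norm (slice_poly P n) \<le> cmod (poly (slice_poly P n) (cis (t n)))"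
    for n by metis
  define z where "z = (\<lambda>n. cis (t n))"
  have z: "z \<in> Aeps \<epsilon>" unfolding z_def by (rule AepsI[where B = 1]) simp
  moreover have "absw \<epsilon> \<omega> z = 1" unfolding z_def by (intro absw_eqI[OF U z[unfolded z_def]]) simp
  moreover have "gauss_limit \<omega> P \<le> absw \<epsilon> \<omega> (poly P z)"
  proof -
    have "c powr \<epsilon> n * l1_norm (slice_poly P n) powr \<epsilon> n \<le> cmod (poly P z n) powr \<epsilon> n" for n
      using t[of n] c l1_norm_nonneg eps_pos[of n]
      by (simp add: z_def poly_slice_poly powr_mono2 flip: powr_mult)
    moreover have "((\<lambda>n. c powr \<epsilon> n * l1_norm (slice_poly P n) powr \<epsilon> n) \<longlongrightarrow> 1 * gauss_limit \<omega> P) \<omega>"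
      by (intro tendsto_mult powr_eps_tendsto_1_non_archimedean[OF U na c]
          tendsto_gauss_limit[OF U P])
    ultimately show ?thesis
      using ultrafilter_tendsto_le[OF U _ tendsto_absw[OF U poly_in_Aeps[OF P z]]] by simp
  qed
  ultimately show ?thesis using that by blast
qed

lemma gauss_eq_gauss_limit:
  assumes U: "ultrafilter_on_nat \<omega>" and na: "\<not> archimedean_at \<epsilon> \<omega>" and P: "P \<in> Apoly \<epsilon>"
  shows "gauss \<epsilon> \<omega> P = gauss_limit \<omega> P"
proof -
  define Z where "Z = {z \<in> Aeps \<epsilon>. absw \<epsilon> \<omega> z \<le> 1}"
  have up: "absw \<epsilon> \<omega> (poly P z) \<le> gauss_limit \<omega> P" if "z \<in> Z" for z
    using that absw_poly_le_gauss_limit[OF U P] unfolding Z_def by blast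
  obtain z0 where z0: "z0 \<in> Z" "gauss_limit \<omega> P \<le> absw \<epsilon> \<omega> (poly P z0)"
    using gauss_limit_le_absw_poly[OF U na P] unfolding Z_def
    by (metis (mono_tags) mem_Collect_eq order_refl)
  have "gauss \<epsilon> \<omega> P = (SUP z\<in>Z. absw \<epsilon> \<omega> (poly P z))"
    unfolding gauss_def Z_def using P by simp
  also have "\<dots> = gauss_limit \<omega> P"
  proof (rule antisym)
    show "(SUP z\<in>Z. absw \<epsilon> \<omega> (poly P z)) \<le> gauss_limit \<omega> P"
      using z0 up by (intro cSUP_least) auto
    show "gauss_limit \<omega> P \<le> (SUP z\<in>Z. absw \<epsilon> \<omega> (poly P z))"
      using z0 up by (intro cSUP_upper2) (auto simp: bdd_above_def)
  qed
  finally show ?thesis .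
qed

lemma gauss_in_Disc:
  assumes "ultrafilter_on_nat \<omega>" "\<not> archimedean_at \<epsilon> \<omega>"
  shows "gauss \<epsilon> \<omega> \<in> Disc \<epsilon>"
proof -
  have "gauss \<epsilon> \<omega> = (\<lambda>P. if P \<in> Apoly \<epsilon> then gauss_limit \<omega> P else 0)"
    using gauss_eq_gauss_limit[OF assms] by (auto simp: gauss_def)
  then show ?thesis using gauss_limit_in_Disc[OF assms] by simp
qed

end


section \<open>Topology of the Berkovich disc and of \<open>\<beta>\<nat>\<close>\<close>

lemma open_coordinate_box:
  "finite F \<Longrightarrow> open {y :: 'i \<Rightarrow> real. \<forall>i\<in>F. \<bar>y i - c i\<bar> < r}"
  by (simp add: Collect_ball_eq open_INT open_Collect_less continuous_intros
      continuous_on_product_coordinates)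

lemma open_contains_coordinate_box:
  fixes x :: "'i \<Rightarrow> real"
  assumes "open W" "x \<in> W"
  obtains F \<delta> where "finite F" "0 < \<delta>" "{y. \<forall>i\<in>F. \<bar>y i - x i\<bar> < \<delta>} \<subseteq> W"
proof -
  have "openin (product_topology (\<lambda>i. euclidean) UNIV) W" using assms(1) by (simp add: open_fun_def)
  from product_topology_open_contains_basis[OF this assms(2)] obtain X where
    X: "x \<in> Pi\<^sub>E UNIV X" "\<forall>i. open (X i)" "finite {i. X i \<noteq> UNIV}" "Pi\<^sub>E UNIV X \<subseteq> W"
    by auto
  define F where "F = {i. X i \<noteq> UNIV}"
  have "\<forall>i\<in>F. \<exists>r>0. ball (x i) r \<subseteq> X i"
    using X(1,2) by (auto simp: open_contains_ball)
  then obtain r where r: "\<forall>i\<in>F. r i > 0 \<and> ball (x i) (r i) \<subseteq> X i" by metis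
  define \<delta> where "\<delta> = Min (insert 1 (r ` F))"
  have F: "finite F" using X(3) by (simp add: F_def)
  have "{y. \<forall>i\<in>F. \<bar>y i - x i\<bar> < \<delta>} \<subseteq> W"
  proof
    fix y assume y: "y \<in> {y. \<forall>i\<in>F. \<bar>y i - x i\<bar> < \<delta>}"
    have "y i \<in> X i" for i
    proof (cases "i \<in> F")
      case True
      then have "\<bar>y i - x i\<bar> < r i" using y F unfolding \<delta>_def by (force intro: less_le_trans)
      then have "y i \<in> ball (x i) (r i)" by (simp add: dist_real_def abs_minus_commute)
      then show ?thesis using r True by blast
    qed (simp add: F_def)
    then show "y \<in> W" using X(4) by auto
  qed
  moreover have "0 < \<delta>" unfolding \<delta>_def using F r by auto
  ultimately show ?thesis using that F by blast
qed

lemma continuous_on_coordinate_box: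
  fixes h :: "('i \<Rightarrow> real) \<Rightarrow> real"
  assumes h: "continuous_on S h" and k: "k \<in> S" and \<eta>: "0 < \<eta>"
  shows "\<exists>F \<delta>. finite F \<and> 0 < \<delta> \<and> (\<forall>y\<in>S. (\<forall>i\<in>F. \<bar>y i - k i\<bar> < \<delta>) \<longrightarrow> \<bar>h y - h k\<bar> < \<eta>)"
proof -
  have "open (ball (h k) \<eta>)" "h k \<in> ball (h k) \<eta>" using \<eta> by auto
  then obtain A where A: "open A" "k \<in> A" "\<forall>y\<in>S. y \<in> A \<longrightarrow> h y \<in> ball (h k) \<eta>"
    using h k unfolding continuous_on_topological by metis
  obtain F \<delta> where F: "finite F" "0 < \<delta>" "{y. \<forall>i\<in>F. \<bar>y i - k i\<bar> < \<delta>} \<subseteq> A"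
    using open_contains_coordinate_box[OF A(1,2)] by blast
  then have "\<forall>y\<in>S. (\<forall>i\<in>F. \<bar>y i - k i\<bar> < \<delta>) \<longrightarrow> \<bar>h y - h k\<bar> < \<eta>"
    using A(3) by (auto simp: dist_real_def abs_minus_commute)
  with F(1,2) show ?thesis by blast
qed

text \<open>Lebesgue-number argument: finitely many boxes of half the radius cover \<open>K\<close>.\<close>

lemma uniformly_continuous_near_compact:
  fixes h :: "('i \<Rightarrow> real) \<Rightarrow> real"
  assumes K: "compact K" "K \<subseteq> S" and h: "continuous_on S h" and \<eta>: "0 < \<eta>"
  obtains F \<delta> where "finite F" "0 < \<delta>"
    "\<And>k y. k \<in> K \<Longrightarrow> y \<in> S \<Longrightarrow> (\<forall>i\<in>F. \<bar>y i - k i\<bar> < \<delta>) \<Longrightarrow> \<bar>h y - h k\<bar> < \<eta>"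
proof -
  have "\<forall>k\<in>K. \<exists>F \<delta>. finite F \<and> 0 < \<delta> \<and>
      (\<forall>y\<in>S. (\<forall>i\<in>F. \<bar>y i - k i\<bar> < \<delta>) \<longrightarrow> \<bar>h y - h k\<bar> < \<eta>/2)"
    using K(2) \<eta> by (intro ballI continuous_on_coordinate_box[OF h]) auto
  then obtain Fk where "\<forall>k\<in>K. \<exists>\<delta>. finite (Fk k) \<and> 0 < \<delta> \<and>
      (\<forall>y\<in>S. (\<forall>i\<in>Fk k. \<bar>y i - k i\<bar> < \<delta>) \<longrightarrow> \<bar>h y - h k\<bar> < \<eta>/2)"
    by (rule bchoice[elim_format]) blast
  then obtain dk where D: "\<forall>k\<in>K. finite (Fk k) \<and> 0 < dk k \<and>
      (\<forall>y\<in>S. (\<forall>i\<in>Fk k. \<bar>y i - k i\<bar> < dk k) \<longrightarrow> \<bar>h y - h k\<bar> < \<eta>/2)"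
    by (rule bchoice[elim_format]) blast
  define V where "V k = {y. \<forall>i\<in>Fk k. \<bar>y i - k i\<bar> < dk k / 2}" for k
  have "open (V k)" if "k \<in> K" for k
    unfolding V_def using D that by (intro open_coordinate_box) auto
  moreover have "K \<subseteq> \<Union>(V ` K)" unfolding V_def using D by fastforce
  ultimately obtain K' where K': "K' \<subseteq> K" "finite K'" "K \<subseteq> \<Union>(V ` K')"
    by (rule compactE_image[OF K(1)])
  define F where "F = (\<Union>k\<in>K'. Fk k)"
  define \<delta> where "\<delta> = Min (insert 1 ((\<lambda>k. dk k / 2) ` K'))"
  have "finite F" unfolding F_def using K' D by auto
  moreover have "0 < \<delta>" unfolding \<delta>_def using K' D by auto
  moreover have "\<bar>h y - h k\<bar> < \<eta>"
    if k: "k \<in> K" and y: "y \<in> S" and close: "\<forall>i\<in>F. \<bar>y i - k i\<bar> < \<delta>" for k y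
  proof -
    obtain k' where k': "k' \<in> K'" "k \<in> V k'" using K'(3) k by blast
    then have k'K: "k' \<in> K" using K' by auto
    have "\<delta> \<le> dk k' / 2" unfolding \<delta>_def using K'(2) k'(1) by (intro Min_le) auto
    have "\<bar>y i - k' i\<bar> < dk k' \<and> \<bar>k i - k' i\<bar> < dk k'" if "i \<in> Fk k'" for i
    proof -
      have "\<bar>y i - k i\<bar> < dk k' / 2" using close \<open>\<delta> \<le> dk k' / 2\<close> that k'(1) unfolding F_def by force
      moreover have "\<bar>k i - k' i\<bar> < dk k' / 2" using k'(2) that unfolding V_def by blast
      ultimately show ?thesis by arith
    qed
    then have "\<bar>h y - h k'\<bar> < \<eta>/2" "\<bar>h k - h k'\<bar> < \<eta>/2"
      using D k'K y k K(2) by blast+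
    then show ?thesis by linarith
  qed
  ultimately show ?thesis using that by blast
qed

lemma closed_Disc: "closed (Disc \<epsilon>)"
proof -
  have "Disc \<epsilon> = {x. (\<forall>P. P \<notin> Apoly \<epsilon> \<longrightarrow> x P = 0) \<and> (\<forall>P. P \<in> Apoly \<epsilon> \<longrightarrow> 0 \<le> x P) \<and>
    x 0 = 0 \<and> x 1 = 1 \<and>
    (\<forall>P Q. P \<in> Apoly \<epsilon> \<longrightarrow> Q \<in> Apoly \<epsilon> \<longrightarrow> x (P + Q) \<le> x P + x Q) \<and>
    (\<forall>P Q. P \<in> Apoly \<epsilon> \<longrightarrow> Q \<in> Apoly \<epsilon> \<longrightarrow> x (P * Q) = x P * x Q) \<and>
    (\<forall>a. a \<in> Aeps \<epsilon> \<longrightarrow> x [:a:] \<le> normA \<epsilon> a) \<and> x [:0, 1:] \<le> 1}"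
    unfolding Disc_def Berk_A1_def by auto
  also have "closed \<dots>"
    by (intro closed_Collect_conj closed_Collect_all closed_Collect_imp closed_Collect_le
        closed_Collect_eq continuous_intros continuous_on_product_coordinates)
      (simp_all add: open_Collect_neg closed_Collect_const)
  finally show ?thesis .
qed

context exponent_sequence
begin

lemma normA_0: "normA \<epsilon> 0 = 0"
  unfolding normA_def using eps_pos by simp

lemma Disc_le_coeff_norm_bound:
  assumes x: "x \<in> Disc \<epsilon>"
  shows "x P \<le> coeff_norm_bound P"
proof (cases "P \<in> Apoly \<epsilon>")
  case True
  have ext: "(\<Sum>k\<le>M. normA \<epsilon> (coeff Q k)) = (\<Sum>k\<le>degree Q. normA \<epsilon> (coeff Q k))"
    if "degree Q \<le> M" for Q M
    using that by (intro sum.mono_neutral_right) (auto simp: coeff_eq_0 normA_0)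
  have x_add: "x (Q + R) \<le> x Q + x R" and x_mult: "x (Q * R) = x Q * x R"
    if "Q \<in> Apoly \<epsilon>" "R \<in> Apoly \<epsilon>" for Q R
    using x that unfolding Disc_def Berk_A1_def by auto
  have x_const: "x [:a:] \<le> normA \<epsilon> a" if "a \<in> Aeps \<epsilon>" for a
    using x that unfolding Disc_def Berk_A1_def by auto
  have x_X: "x [:0, 1:] \<le> 1" and x_0: "x 0 = 0" and x_nonneg: "Q \<in> Apoly \<epsilon> \<Longrightarrow> 0 \<le> x Q" for Q
    using x unfolding Disc_def Berk_A1_def by auto
  have "P \<in> Apoly \<epsilon> \<Longrightarrow> x P \<le> (\<Sum>k\<le>degree P. normA \<epsilon> (coeff P k))"
  proof (induction P)
    case 0
    then show ?case using x_0 by (simp add: normA_def)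
  next
    case (pCons a p)
    then have a: "a \<in> Aeps \<epsilon>" and p: "p \<in> Apoly \<epsilon>" by (auto simp: Apoly_pCons)
    have "x (pCons a p) = x ([:a:] + [:0, 1:] * p)" by simp
    also have "\<dots> \<le> x [:a:] + x [:0, 1:] * x p"
      using x_add[of "[:a:]" "[:0, 1:] * p"] x_mult[OF Apoly_X p] a Apoly_mult[OF Apoly_X p]
      by (simp add: Apoly_const)
    also have "\<dots> \<le> normA \<epsilon> a + x p"
      using x_const[OF a] x_X x_nonneg[OF Apoly_X] x_nonneg[OF p]
      by (intro add_mono mult_left_le_one_le) auto
    also have "\<dots> \<le> normA \<epsilon> a + (\<Sum>k\<le>degree p. normA \<epsilon> (coeff p k))" using pCons.IH p by simp
    also have "\<dots> = (\<Sum>k\<le>Suc (degree p). normA \<epsilon> (coeff (pCons a p) k))"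
      unfolding sum.atMost_Suc_shift by simp
    also have "\<dots> = (\<Sum>k\<le>degree (pCons a p). normA \<epsilon> (coeff (pCons a p) k))"
      by (rule ext) simp
    finally show ?case .
  qed
  then show ?thesis using True by (simp add: coeff_norm_bound_def)
next
  case False
  then show ?thesis using x by (simp add: coeff_norm_bound_def Disc_def Berk_A1_def)
qed

lemma compact_Disc: "compact (Disc \<epsilon>)"
proof -
  have "compactin (product_topology (\<lambda>_. euclidean) UNIV) (Pi\<^sub>E UNIV (\<lambda>P. {0..coeff_norm_bound P}))"
    by (subst compactin_PiE) (auto simp: compactin_euclidean_iff)
  then have "compact (Pi\<^sub>E UNIV (\<lambda>P. {0..coeff_norm_bound P}))"
    by (simp add: euclidean_product_topology compactin_euclidean_iff)
  moreover have "Disc \<epsilon> \<subseteq> Pi\<^sub>E UNIV (\<lambda>P. {0..coeff_norm_bound P})"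
    using Disc_le_coeff_norm_bound unfolding Disc_def Berk_A1_def by (force simp: PiE_UNIV_domain)
  ultimately show ?thesis using closed_Disc by (metis compact_Int_closed inf.absorb_iff2)
qed

end

lemma istopology_glued:
  "istopology (\<lambda>U. U \<subseteq> X \<and> openin T1 {x \<in> topspace T1. g1 x \<in> U} \<and>
      openin T2 {x \<in> topspace T2. g2 x \<in> U})"
proof -
  have inter: "{x \<in> topspace T. g x \<in> U \<inter> V} =
      {x \<in> topspace T. g x \<in> U} \<inter> {x \<in> topspace T. g x \<in> V}"
    and union: "{x \<in> topspace T. g x \<in> \<Union>\<K>} = (\<Union>U\<in>\<K>. {x \<in> topspace T. g x \<in> U})"
    for T g U V and \<K> :: "'a set set"
    by auto
  show ?thesis unfolding istopology_def inter union by (auto intro!: openin_Int openin_Union)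
qed

lemma openin_P1top: "openin (P1top \<epsilon>) U \<longleftrightarrow> U \<subseteq> P1 \<epsilon> \<and>
    openin (top_of_set (Disc \<epsilon>)) {x \<in> Disc \<epsilon>. chart0 x \<in> U} \<and>
    openin (top_of_set (Disc \<epsilon>)) {y \<in> Disc \<epsilon>. chartInf \<epsilon> y \<in> U}"
  using topology_inverse'[OF istopology_glued[of "P1 \<epsilon>" "top_of_set (Disc \<epsilon>)" chart0
        "top_of_set (Disc \<epsilon>)" "chartInf \<epsilon>"]]
  unfolding P1top_def by simp

lemma topspace_P1top: "topspace (P1top \<epsilon>) = P1 \<epsilon>"
proof -
  have "{x \<in> Disc \<epsilon>. chart0 x \<in> P1 \<epsilon>} = Disc \<epsilon>" "{y \<in> Disc \<epsilon>. chartInf \<epsilon> y \<in> P1 \<epsilon>} = Disc \<epsilon>"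
    by (auto simp: P1_def)
  then have "openin (P1top \<epsilon>) (P1 \<epsilon>)" unfolding openin_P1top by simp
  then show ?thesis using openin_subset openin_P1top by (auto simp: topspace_def)
qed

lemma chart0_in_P1: "x \<in> Disc \<epsilon> \<Longrightarrow> chart0 x \<in> P1 \<epsilon>"
  unfolding P1_def by auto

lemma continuous_on_Disc_chart0:
  assumes f: "continuous_map (P1top \<epsilon>) euclideanreal f"
  shows "continuous_on (Disc \<epsilon>) (\<lambda>x. f (chart0 x))"
  unfolding continuous_map_iff_continuous[symmetric] continuous_map_def
proof (intro conjI allI impI)
  fix V :: "real set" assume "openin euclideanreal V"
  then have "openin (P1top \<epsilon>) {p \<in> P1 \<epsilon>. f p \<in> V}"
    using f unfolding continuous_map_def topspace_P1top by blast
  moreover have "{x \<in> Disc \<epsilon>. chart0 x \<in> {p \<in> P1 \<epsilon>. f p \<in> V}} = {x \<in> Disc \<epsilon>. f (chart0 x) \<in> V}"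
    using chart0_in_P1 by auto
  ultimately show
    "openin (top_of_set (Disc \<epsilon>)) {x \<in> topspace (top_of_set (Disc \<epsilon>)). f (chart0 x) \<in> V}"
    unfolding openin_P1top by simp
qed simp

lemma space_borel_on: "space (borel_on T) = topspace T"
  and sets_borel_on: "sets (borel_on T) = sigma_sets (topspace T) {U. openin T U}"
  unfolding borel_on_def by (auto intro!: space_measure_of sets_measure_of dest: openin_subset)

lemma borel_measurable_borel_on:
  assumes "continuous_map T euclideanreal f"
  shows "f \<in> borel_measurable (borel_on T)"
proof (rule borel_measurableI)
  fix S :: "real set" assume "open S"
  then have "openin T {p \<in> topspace T. f p \<in> S}" using assms by (auto simp: continuous_map_def)
  then show "f -` S \<inter> space (borel_on T) \<in> sets (borel_on T)"
    unfolding sets_borel_on space_borel_on by (auto simp: Int_def conj_commute)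
qed

lemma measurable_chart0_path:
  fixes X :: "real \<Rightarrow> seminorm"
  assumes X: "continuous_on UNIV X" "\<And>t. X t \<in> Disc \<epsilon>"
  shows "(\<lambda>t. chart0 (X t)) \<in> angle_measure \<rightarrow>\<^sub>M borel_on (P1top \<epsilon>)"
  unfolding borel_on_def
proof (rule measurable_measure_of)
  show "(\<lambda>t. chart0 (X t)) \<in> space angle_measure \<rightarrow> topspace (P1top \<epsilon>)"
    using X(2) chart0_in_P1 by (auto simp: topspace_P1top)
next
  fix U assume "U \<in> {U. openin (P1top \<epsilon>) U}"
  then obtain T where T: "open T" "{x \<in> Disc \<epsilon>. chart0 x \<in> U} = Disc \<epsilon> \<inter> T"
    unfolding openin_P1top openin_open by auto
  then have "(\<lambda>t. chart0 (X t)) -` U \<inter> space angle_measure = X -` T"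
    using X(2) by (auto simp: set_eq_iff)
  moreover have "open (X -` T)" using X(1) T(1) by (simp add: continuous_on_open_vimage)
  ultimately show "(\<lambda>t. chart0 (X t)) -` U \<inter> space angle_measure \<in> sets angle_measure" by simp
qed (auto dest: openin_subset)

lemma openin_betaN_top: "openin betaN_top U \<longleftrightarrow> U \<subseteq> betaN \<and>
    (\<forall>\<omega>\<in>U. \<exists>A. eventually (\<lambda>n. n \<in> A) \<omega> \<and> {\<nu> \<in> betaN. eventually (\<lambda>n. n \<in> A) \<nu>} \<subseteq> U)"
proof -
  define nbhd where "nbhd A = {\<nu> \<in> betaN. eventually (\<lambda>n. n \<in> A) \<nu>}" for A
  have nbhd_Int: "nbhd (A \<inter> B) = nbhd A \<inter> nbhd B" for A B
    unfolding nbhd_def by (auto simp: eventually_conj_iff elim: eventually_mono)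
  have "istopology (\<lambda>U. U \<subseteq> betaN \<and> (\<forall>\<omega>\<in>U. \<exists>A. eventually (\<lambda>n. n \<in> A) \<omega> \<and> nbhd A \<subseteq> U))"
    unfolding istopology_def
  proof (rule conjI; intro allI impI)
    fix S T :: "nat filter set"
    assume S: "S \<subseteq> betaN \<and> (\<forall>\<omega>\<in>S. \<exists>A. eventually (\<lambda>n. n \<in> A) \<omega> \<and> nbhd A \<subseteq> S)"
      and T: "T \<subseteq> betaN \<and> (\<forall>\<omega>\<in>T. \<exists>A. eventually (\<lambda>n. n \<in> A) \<omega> \<and> nbhd A \<subseteq> T)"
    have "\<exists>C. eventually (\<lambda>n. n \<in> C) \<omega> \<and> nbhd C \<subseteq> S \<inter> T" if \<omega>: "\<omega> \<in> S \<inter> T" for \<omega>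
    proof -
      obtain A B where "eventually (\<lambda>n. n \<in> A) \<omega>" "nbhd A \<subseteq> S"
        "eventually (\<lambda>n. n \<in> B) \<omega>" "nbhd B \<subseteq> T"
        using S T \<omega> by (meson IntD1 IntD2)
      then have "eventually (\<lambda>n. n \<in> A \<inter> B) \<omega>" "nbhd (A \<inter> B) \<subseteq> S \<inter> T"
        unfolding nbhd_Int by (auto simp: eventually_conj_iff)
      then show ?thesis by blast
    qed
    with S show "S \<inter> T \<subseteq> betaN \<and> (\<forall>\<omega>\<in>S \<inter> T. \<exists>A. eventually (\<lambda>n. n \<in> A) \<omega> \<and> nbhd A \<subseteq> S \<inter> T)"
      by auto
  next
    fix \<K> :: "nat filter set set"
    assume "\<forall>U\<in>\<K>. U \<subseteq> betaN \<and> (\<forall>\<omega>\<in>U. \<exists>A. eventually (\<lambda>n. n \<in> A) \<omega> \<and> nbhd A \<subseteq> U)"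
    then show "\<Union>\<K> \<subseteq> betaN \<and> (\<forall>\<omega>\<in>\<Union>\<K>. \<exists>A. eventually (\<lambda>n. n \<in> A) \<omega> \<and> nbhd A \<subseteq> \<Union>\<K>)"
      by (meson Union_iff Union_least Union_upper order_trans)
  qed
  then show ?thesis unfolding betaN_top_def nbhd_def by (simp add: topology_inverse')
qed

lemma topspace_betaN_top: "topspace betaN_top = betaN"
proof -
  have "openin betaN_top betaN" unfolding openin_betaN_top by (auto intro!: exI[of _ UNIV])
  then show ?thesis using openin_subset openin_betaN_top by (auto simp: topspace_def)
qed

lemma continuous_map_betaN_top:
  fixes F :: "nat filter \<Rightarrow> real"
  assumes lim: "\<And>\<omega>. \<omega> \<in> betaN \<Longrightarrow> ((\<lambda>n. F (principal {n})) \<longlongrightarrow> F \<omega>) \<omega>"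
  shows "continuous_map betaN_top euclideanreal F"
  unfolding continuous_map_def topspace_betaN_top
proof (intro conjI allI impI)
  fix V :: "real set" assume "openin euclideanreal V"
  then have V: "open V" by simp
  show "openin betaN_top {\<omega> \<in> betaN. F \<omega> \<in> V}" unfolding openin_betaN_top
  proof (intro conjI ballI)
    fix \<omega> assume \<omega>: "\<omega> \<in> {\<omega> \<in> betaN. F \<omega> \<in> V}"
    then obtain r where r: "0 < r" "ball (F \<omega>) r \<subseteq> V" using V open_contains_ball by blast
    define A where "A = {n. dist (F (principal {n})) (F \<omega>) < r/2}"
    have "eventually (\<lambda>n. n \<in> A) \<omega>"
      unfolding A_def using tendstoD[OF lim, of \<omega> "r/2"] \<omega> r by simp
    moreover have "F \<nu> \<in> V" if \<nu>: "\<nu> \<in> betaN" "eventually (\<lambda>n. n \<in> A) \<nu>" for \<nu>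
    proof -
      have "eventually (\<lambda>n. dist (F (principal {n})) (F \<omega>) \<le> r/2) \<nu>"
        using \<nu>(2) by eventually_elim (simp add: A_def)
      then have "dist (F \<nu>) (F \<omega>) \<le> r/2"
        using \<nu> lim by (intro ultrafilter_tendsto_le[OF _ tendsto_dist tendsto_const])
          (auto simp: betaN_def)
      then show ?thesis using r by (auto simp: dist_commute)
    qed
    ultimately show "\<exists>A. eventually (\<lambda>n. n \<in> A) \<omega> \<and>
        {\<nu> \<in> betaN. eventually (\<lambda>n. n \<in> A) \<nu>} \<subseteq> {\<omega> \<in> betaN. F \<omega> \<in> V}"
      by blast
  qed auto
qed simp


section \<open>Convergence of the fibre measures\<close>

lemma (in prob_space) abs_integral_diff_le:
  fixes a b :: "'a \<Rightarrow> real"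
  assumes a: "integrable M a" and b: "integrable M b" and B: "B \<in> events" and K: "0 \<le> K"
    and le: "\<And>t. t \<in> space M \<Longrightarrow> \<bar>a t - b t\<bar> \<le> e + K * indicator B t"
  shows "\<bar>(\<integral>t. a t \<partial>M) - (\<integral>t. b t \<partial>M)\<bar> \<le> e + K * prob B"
proof -
  have B_int: "integrable M (\<lambda>t. K * indicat_real B t)"
    using B
    by (intro integrable_mult_right integrable_real_indicator) (auto simp: emeasure_eq_measure)
  have "\<bar>(\<integral>t. a t \<partial>M) - (\<integral>t. b t \<partial>M)\<bar> = norm (\<integral>t. a t - b t \<partial>M)"
    using Bochner_Integration.integral_diff[OF a b] by simp
  also have "\<dots> \<le> (\<integral>t. norm (a t - b t) \<partial>M)" by (rule integral_norm_bound)
  also have "\<dots> \<le> (\<integral>t. e + K * indicator B t \<partial>M)"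
    using a b B_int le by (intro integral_mono Bochner_Integration.integrable_add) auto
  also have "\<dots> = e + K * prob B"
    using Bochner_Integration.integral_add[OF integrable_const B_int] B by (simp add: prob_space)
  finally show ?thesis .
qed

lemma integrable_angle_measure_continuous:
  fixes u :: "real \<Rightarrow> real"
  assumes "continuous_on UNIV u" "\<And>t. \<bar>u t\<bar> \<le> B"
  shows "integrable angle_measure u"
proof (rule angle.integrable_const_bound)
  show "AE t in angle_measure. norm (u t) \<le> B" by (rule AE_I2) (use assms(2) in simp)
  have "measurable angle_measure borel = measurable borel (borel :: real measure)"
    by (rule measurable_cong_sets) simp_all
  then show "u \<in> borel_measurable angle_measure"
    using borel_measurable_continuous_onI[OF assms(1)] by simp
qed

lemma norm_poly_diff_le:
  fixes p :: "complex poly"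
  assumes R: "\<And>k. cmod (coeff p k) \<le> R" and D: "degree p \<le> D"
    and w: "cmod w \<le> 1" "cmod w' \<le> 1"
  shows "cmod (poly p w - poly p w') \<le> (\<Sum>k\<le>D. R * real k) * cmod (w - w')"
proof -
  have poly_D: "poly p u = (\<Sum>k\<le>D. coeff p k * u ^ k)" for u
    unfolding poly_altdef using D by (intro sum.mono_neutral_left) (auto simp: coeff_eq_0)
  have "cmod (poly p w - poly p w') = cmod (\<Sum>k\<le>D. coeff p k * (w ^ k - w' ^ k))"
    unfolding poly_D by (simp add: sum_subtractf[symmetric] algebra_simps)
  also have "\<dots> \<le> (\<Sum>k\<le>D. cmod (coeff p k * (w ^ k - w' ^ k)))" by (rule norm_sum)
  also have "\<dots> \<le> (\<Sum>k\<le>D. R * (real k * cmod (w - w')))"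
  proof (rule sum_mono)
    fix k
    have "0 \<le> R" using R[of 0] norm_ge_zero order_trans by blast
    then show "cmod (coeff p k * (w ^ k - w' ^ k)) \<le> R * (real k * cmod (w - w'))"
      unfolding norm_mult using R[of k] norm_power_diff[OF w] by (intro mult_mono) auto
  qed
  also have "\<dots> = (\<Sum>k\<le>D. R * real k) * cmod (w - w')"
    by (simp add: sum_distrib_right mult.assoc)
  finally show ?thesis .
qed

lemma abs_powr_norm_poly_diff_le:
  fixes p :: "complex poly"
  assumes "\<And>k. cmod (coeff p k) \<le> R" "degree p \<le> D" "cmod w \<le> 1" "cmod w' \<le> 1"
    and e: "0 < e" "e \<le> a" "a \<le> 1" and small: "(\<Sum>k\<le>D. R * real k) * cmod (w - w') \<le> 1"
  shows "\<bar>cmod (poly p w) powr a - cmod (poly p w') powr a\<bar> \<le>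
    ((\<Sum>k\<le>D. R * real k) * cmod (w - w')) powr e"
proof -
  let ?t = "(\<Sum>k\<le>D. R * real k) * cmod (w - w')"
  have "cmod (poly p w - poly p w') \<le> ?t" by (rule norm_poly_diff_le[OF assms(1-4)])
  then have "\<bar>cmod (poly p w) - cmod (poly p w')\<bar> \<le> ?t"
    using norm_triangle_ineq3 order_trans by blast
  have "\<bar>cmod (poly p w) powr a - cmod (poly p w') powr a\<bar> \<le>
      \<bar>cmod (poly p w) - cmod (poly p w')\<bar> powr a"
    using e by (intro abs_powr_diff_le) auto
  also have "\<dots> \<le> ?t powr a"
    using e \<open>\<bar>_\<bar> \<le> ?t\<close> by (intro powr_mono2) auto
  also have "\<dots> \<le> ?t powr e"
    using small e order_trans[OF abs_ge_zero \<open>\<bar>_\<bar> \<le> ?t\<close>]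
    by (cases "?t = 0") (auto intro: powr_mono')
  finally show ?thesis .
qed

context exponent_sequence
begin

lemma evalc_diff_le_of_eventually:
  assumes "ultrafilter_on_nat \<omega>"
    and "eventually (\<lambda>n. \<bar>evalc (principal {n}) w P - evalc (principal {n}) w' P\<bar> \<le> \<delta>) \<omega>"
  shows "\<bar>evalc \<omega> w P - evalc \<omega> w' P\<bar> \<le> \<delta>"
  using assms tendsto_rabs[OF tendsto_diff[OF tendsto_evalc tendsto_evalc]]
  by (intro ultrafilter_tendsto_le[OF _ _ tendsto_const]) auto


lemma eventually_coeffs_bounded_archimedean:
  assumes U: "ultrafilter_on_nat \<omega>" and ar: "archimedean_at \<epsilon> \<omega>" and P: "P \<in> Apoly \<epsilon>"
  obtains e R where "0 < e" "0 \<le> R"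
    "eventually (\<lambda>n. e \<le> \<epsilon> n \<and> (\<forall>k. cmod (coeff (slice_poly P n) k) \<le> R)) \<omega>"
proof -
  obtain e where e: "0 < e" "eventually (\<lambda>n. e \<le> \<epsilon> n) \<omega>"
    using eps_bounded_below_archimedean[OF U ar] by blast
  define R where "R = (\<Sum>k\<le>degree P. max 1 (normA \<epsilon> (coeff P k) powr (1/e)))"
  have coeff_le: "cmod (coeff P k n) \<le> max 1 (normA \<epsilon> (coeff P k) powr (1/e))" if "e \<le> \<epsilon> n" for k n
  proof (cases "cmod (coeff P k n) \<le> 1")
    case False
    have "cmod (coeff P k n) powr e \<le> cmod (coeff P k n) powr \<epsilon> n"
      using False that by (intro powr_mono) auto
    also have "\<dots> \<le> normA \<epsilon> (coeff P k)" by (rule norm_powr_le_normA[OF coeff_in_Aeps[OF P]])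
    finally have "(cmod (coeff P k n) powr e) powr (1/e) \<le> normA \<epsilon> (coeff P k) powr (1/e)"
      using e(1) by (intro powr_mono2) auto
    then show ?thesis using e(1) False by (simp add: powr_powr)
  qed simp
  have bound: "cmod (coeff (slice_poly P n) k) \<le> R" if "e \<le> \<epsilon> n" for n k
  proof (cases "k \<le> degree P")
    case True
    then show ?thesis using coeff_le[OF that, of k] unfolding R_def coeff_slice_poly
      by (intro order.trans[OF _ member_le_sum]) auto
  qed (auto simp: R_def coeff_slice_poly coeff_eq_0 intro: sum_nonneg)
  have "eventually (\<lambda>n. e \<le> \<epsilon> n \<and> (\<forall>k. cmod (coeff (slice_poly P n) k) \<le> R)) \<omega>"
    using e(2) by (rule eventually_mono) (simp add: bound)
  moreover have "0 \<le> R" unfolding R_def by (intro sum_nonneg) auto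
  ultimately show ?thesis using that e(1) by blast
qed

lemma eventually_evalc_equicontinuous:
  assumes U: "ultrafilter_on_nat \<omega>" and ar: "archimedean_at \<epsilon> \<omega>" and \<delta>: "0 < \<delta>"
  obtains \<rho> where "0 < \<rho>" "eventually (\<lambda>n. \<forall>w\<in>cball 0 1. \<forall>w'\<in>cball 0 1. cmod (w - w') < \<rho> \<longrightarrow>
      \<bar>evalc (principal {n}) w P - evalc (principal {n}) w' P\<bar> \<le> \<delta>) \<omega>"
proof (cases "P \<in> Apoly \<epsilon>")
  case False
  then show ?thesis using that[of 1] \<delta> by (simp add: evalpt_def)
next
  case P: True
  obtain e R where eR: "0 < e" "0 \<le> R"
    "eventually (\<lambda>n. e \<le> \<epsilon> n \<and> (\<forall>k. cmod (coeff (slice_poly P n) k) \<le> R)) \<omega>"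
    using eventually_coeffs_bounded_archimedean[OF U ar P] by blast
  define L where "L = (\<Sum>k\<le>degree P. R * real k)"
  have L: "0 \<le> L" unfolding L_def using eR by (intro sum_nonneg) auto
  define q where "q = min 1 \<delta> powr (1/e)"
  have q: "0 < q" "q \<le> 1" "q powr e \<le> \<delta>"
    unfolding q_def using \<delta> eR by (auto simp: powr_powr intro: powr_le1)
  define \<rho> where "\<rho> = q / (L + 1)"
  have "0 < \<rho>" unfolding \<rho>_def using q L by simp
  have "L * \<rho> \<le> q" unfolding \<rho>_def using q L by (simp add: field_simps)
  have close: "\<bar>evalc (principal {n}) w P - evalc (principal {n}) w' P\<bar> \<le> \<delta>"
    if n: "e \<le> \<epsilon> n" "\<forall>k. cmod (coeff (slice_poly P n) k) \<le> R"
      and w: "cmod w \<le> 1" "cmod w' \<le> 1" "cmod (w - w') < \<rho>" for n w w'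
  proof -
    have t: "0 \<le> L * cmod (w - w')" "L * cmod (w - w') \<le> q"
      using L \<open>L * \<rho> \<le> q\<close> w(3) by (auto intro: order_trans[OF mult_left_mono[OF less_imp_le]])
    have "\<bar>evalc (principal {n}) w P - evalc (principal {n}) w' P\<bar> \<le> (L * cmod (w - w')) powr e"
      unfolding evalc_principal[OF P] L_def
      using n t q eR(1) eps_le_1[of n]
      by (intro abs_powr_norm_poly_diff_le degree_slice_poly_le w(1,2)) (auto simp: L_def)
    also have "\<dots> \<le> \<delta>" using t q eR(1) by (meson order_trans powr_mono2 less_imp_le)
    finally show ?thesis .
  qed
  have "eventually (\<lambda>n. \<forall>w\<in>cball 0 1. \<forall>w'\<in>cball 0 1. cmod (w - w') < \<rho> \<longrightarrow>
      \<bar>evalc (principal {n}) w P - evalc (principal {n}) w' P\<bar> \<le> \<delta>) \<omega>"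
    using eR(3) by (rule eventually_mono) (simp add: close)
  then show ?thesis using that \<open>0 < \<rho>\<close> by blast
qed

lemma evalc_tendsto_uniformly_archimedean:
  assumes U: "ultrafilter_on_nat \<omega>" and ar: "archimedean_at \<epsilon> \<omega>" and \<delta>: "0 < \<delta>"
  shows "eventually (\<lambda>n. \<forall>w\<in>sphere 0 1. \<bar>evalc (principal {n}) w P - evalc \<omega> w P\<bar> \<le> \<delta>) \<omega>"
proof -
  obtain \<rho> where \<rho>: "0 < \<rho>" "eventually (\<lambda>n. \<forall>w\<in>cball 0 1. \<forall>w'\<in>cball 0 1. cmod (w - w') < \<rho> \<longrightarrow>
      \<bar>evalc (principal {n}) w P - evalc (principal {n}) w' P\<bar> \<le> \<delta>/3) \<omega>"
    using eventually_evalc_equicontinuous[OF U ar, of "\<delta>/3"] \<delta> by auto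
  have lim: "\<bar>evalc \<omega> w P - evalc \<omega> w' P\<bar> \<le> \<delta>/3"
    if "w \<in> cball 0 1" "w' \<in> cball 0 1" "cmod (w - w') < \<rho>" for w w'
    using \<rho>(2) that by (intro evalc_diff_le_of_eventually[OF U]) (auto elim: eventually_mono)
  have cover: "sphere (0::complex) 1 \<subseteq> (\<Union>c\<in>sphere 0 1. ball c \<rho>)" using \<rho>(1) by force
  obtain N where N: "N \<subseteq> sphere 0 1" "finite N" "sphere (0::complex) 1 \<subseteq> (\<Union>c\<in>N. ball c \<rho>)"
    by (rule compactE_image[OF compact_sphere _ cover]) auto
  have "eventually (\<lambda>n. \<forall>c\<in>N. \<bar>evalc (principal {n}) c P - evalc \<omega> c P\<bar> < \<delta>/3) \<omega>"
  proof (rule eventually_ball_finite[OF N(2)], intro ballI)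
    fix c
    show "eventually (\<lambda>n. \<bar>evalc (principal {n}) c P - evalc \<omega> c P\<bar> < \<delta>/3) \<omega>"
      using tendstoD[OF tendsto_evalc[OF U], of "\<delta>/3"] \<delta> by (simp add: dist_real_def)
  qed
  with \<rho>(2) show ?thesis
  proof eventually_elim
    case (elim n)
    show ?case
    proof
      fix w :: complex assume w: "w \<in> sphere 0 1"
      obtain c where c: "c \<in> N" "w \<in> ball c \<rho>" using N(3) w by blast
      have "c \<in> cball 0 1" "w \<in> cball 0 1" "cmod (w - c) < \<rho>" "cmod (c - w) < \<rho>"
        using c N(1) w by (auto simp: dist_norm norm_minus_commute)
      then have "\<bar>evalc (principal {n}) w P - evalc (principal {n}) c P\<bar> \<le> \<delta>/3"
        "\<bar>evalc \<omega> c P - evalc \<omega> w P\<bar> \<le> \<delta>/3"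
        "\<bar>evalc (principal {n}) c P - evalc \<omega> c P\<bar> < \<delta>/3"
        using elim lim c(1) by auto
      then show "\<bar>evalc (principal {n}) w P - evalc \<omega> w P\<bar> \<le> \<delta>" by linarith
    qed
  qed
qed

lemma continuous_on_evalc_archimedean:
  assumes U: "ultrafilter_on_nat \<omega>" and ar: "archimedean_at \<epsilon> \<omega>"
  shows "continuous_on (sphere 0 1) (evalc \<omega>)"
proof (rule continuous_on_coordinatewise_then_product)
  fix P
  show "continuous_on (sphere 0 1) (\<lambda>w. evalc \<omega> w P)"
    unfolding continuous_on_iff
  proof (intro ballI allI impI)
    fix x :: complex and e :: real assume x: "x \<in> sphere 0 1" and e: "0 < e"
    obtain \<rho> where \<rho>: "0 < \<rho>" "eventually (\<lambda>n. \<forall>w\<in>cball 0 1. \<forall>w'\<in>cball 0 1. cmod (w - w') < \<rho> \<longrightarrow>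
        \<bar>evalc (principal {n}) w P - evalc (principal {n}) w' P\<bar> \<le> e/2) \<omega>"
      using eventually_evalc_equicontinuous[OF U ar, of "e/2"] e by auto
    have "dist (evalc \<omega> x' P) (evalc \<omega> x P) < e" if "x' \<in> sphere 0 1" "dist x' x < \<rho>" for x'
    proof -
      have "\<bar>evalc \<omega> x' P - evalc \<omega> x P\<bar> \<le> e/2"
        using \<rho>(2) x that by (intro evalc_diff_le_of_eventually[OF U])
          (auto simp: dist_norm elim: eventually_mono)
      then show ?thesis using e by (simp add: dist_real_def)
    qed
    then show "\<exists>d>0. \<forall>x'\<in>sphere 0 1. dist x' x < d \<longrightarrow> dist (evalc \<omega> x' P) (evalc \<omega> x P) < e"
      using \<rho>(1) by blast
  qed
qed

end

lemma measure_Union_small_angles_le: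
  fixes F :: "seq poly set"
  assumes F: "finite F" and \<beta>: "0 < \<beta>"
  obtains \<rho> :: "seq poly \<Rightarrow> real" where "\<And>P. 0 < \<rho> P" "\<And>P. \<rho> P \<le> 1"
    "\<And>n. measure angle_measure (\<Union>P\<in>F. small_angles ((\<rho> P/3) ^ degree P) (slice_poly P n)) \<le> \<beta>"
proof -
  define \<rho> where "\<rho> P = min 1 (\<beta> / (16 * (real (degree P) + 1) * (real (card F) + 1)))"
    for P :: "seq poly"
  have \<rho>: "0 < \<rho> P" "\<rho> P \<le> 1" for P unfolding \<rho>_def using \<beta> by auto
  have bound: "16 * real (degree P) * \<rho> P \<le> \<beta> / (real (card F) + 1)" for P :: "seq poly"
  proof -
    have "16 * real (degree P) * \<rho> P \<le>
        16 * (real (degree P) + 1) * (\<beta> / (16 * (real (degree P) + 1) * (real (card F) + 1)))"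
      unfolding \<rho>_def using \<beta> by (intro mult_mono) auto
    then show ?thesis by simp
  qed
  have each: "measure angle_measure (small_angles ((\<rho> P/3) ^ degree P) (slice_poly P n))
      \<le> \<beta> / (real (card F) + 1)" for P n
    using order_trans[OF measure_small_angles_le[OF degree_slice_poly_le \<rho>] bound] .
  have "measure angle_measure (\<Union>P\<in>F. small_angles ((\<rho> P/3) ^ degree P) (slice_poly P n))
      \<le> (\<Sum>P\<in>F. \<beta> / (real (card F) + 1))" for n
    using F by (intro order_trans[OF measure_UNION_le sum_mono]) (auto simp: each)
  also have "\<dots> \<le> \<beta>" using \<beta> by (simp add: field_simps)
  finally show ?thesis using that \<rho> by blast
qed

context exponent_sequence
begin

lemma continuous_on_Disc_bounded:
  fixes h :: "seminorm \<Rightarrow> real"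
  assumes "continuous_on (Disc \<epsilon>) h"
  obtains B where "0 \<le> B" "\<And>x. x \<in> Disc \<epsilon> \<Longrightarrow> \<bar>h x\<bar> \<le> (B :: real)"
proof -
  have "bounded (h ` Disc \<epsilon>)"
    by (intro compact_imp_bounded compact_continuous_image assms compact_Disc)
  then obtain B where "\<forall>y\<in>h ` Disc \<epsilon>. norm y \<le> B" unfolding bounded_iff by blast
  then show ?thesis using that[of "max 0 B"] by force
qed

lemma continuous_on_evalc_cis:
  assumes "ultrafilter_on_nat \<omega>" "archimedean_at \<epsilon> \<omega>"
  shows "continuous_on UNIV (\<lambda>t. evalc \<omega> (cis t))"
  by (rule continuous_on_compose2[OF continuous_on_evalc_archimedean[OF assms]])
    (auto intro: continuous_intros)

lemma integrable_evalc_cis: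
  fixes h :: "seminorm \<Rightarrow> real"
  assumes U: "ultrafilter_on_nat \<omega>" and ar: "archimedean_at \<epsilon> \<omega>" and h: "continuous_on (Disc \<epsilon>) h"
  shows "integrable angle_measure (\<lambda>t. h (evalc \<omega> (cis t)))"
proof -
  obtain B where B: "\<And>x. x \<in> Disc \<epsilon> \<Longrightarrow> \<bar>h x\<bar> \<le> B" using continuous_on_Disc_bounded[OF h] by blast
  have "continuous_on UNIV (\<lambda>t. h (evalc \<omega> (cis t)))"
    by (rule continuous_on_compose2[OF h continuous_on_evalc_cis[OF U ar]])
      (auto intro: evalc_in_Disc[OF U])
  then show ?thesis
    using B evalc_in_Disc[OF U] by (intro integrable_angle_measure_continuous[where B = B]) auto
qed

lemma tendsto_integral_archimedean:
  fixes h :: "seminorm \<Rightarrow> real"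
  assumes U: "ultrafilter_on_nat \<omega>" and ar: "archimedean_at \<epsilon> \<omega>" and h: "continuous_on (Disc \<epsilon>) h"
  shows "((\<lambda>n. \<integral>t. h (evalc (principal {n}) (cis t)) \<partial>angle_measure) \<longlongrightarrow>
    (\<integral>t. h (evalc \<omega> (cis t)) \<partial>angle_measure)) \<omega>"
proof (rule tendstoI)
  fix \<eta> :: real assume \<eta>: "0 < \<eta>"
  have K: "compact (evalc \<omega> ` sphere 0 1)"
    by (intro compact_continuous_image continuous_on_evalc_archimedean[OF U ar] compact_sphere)
  have KD: "evalc \<omega> ` sphere 0 1 \<subseteq> Disc \<epsilon>" using evalc_in_Disc[OF U] by auto
  obtain F \<delta> where F: "finite F" "0 < \<delta>" and close:
    "\<And>k y. k \<in> evalc \<omega> ` sphere 0 1 \<Longrightarrow> y \<in> Disc \<epsilon> \<Longrightarrow> (\<forall>P\<in>F. \<bar>y P - k P\<bar> < \<delta>) \<Longrightarrow>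
      \<bar>h y - h k\<bar> < \<eta>/2"
    using uniformly_continuous_near_compact[OF K KD h, of "\<eta>/2"] \<eta> by auto
  have "eventually (\<lambda>n. \<forall>P\<in>F. \<forall>w\<in>sphere 0 1.
      \<bar>evalc (principal {n}) w P - evalc \<omega> w P\<bar> \<le> \<delta>/2) \<omega>"
    using F(2)
    by (intro eventually_ball_finite[OF F(1)] ballI evalc_tendsto_uniformly_archimedean[OF U ar])
      simp
  then show "eventually (\<lambda>n. dist (\<integral>t. h (evalc (principal {n}) (cis t)) \<partial>angle_measure)
      (\<integral>t. h (evalc \<omega> (cis t)) \<partial>angle_measure) < \<eta>) \<omega>"
  proof eventually_elim
    case (elim n)
    have n: "ultrafilter_on_nat (principal {n})" by (rule ultrafilter_on_nat_principal)
    have "\<bar>h (evalc (principal {n}) (cis t)) - h (evalc \<omega> (cis t))\<bar> \<le> \<eta>/2 + 0 * indicator {} t"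
      for t
    proof -
      have "\<forall>P\<in>F. \<bar>evalc (principal {n}) (cis t) P - evalc \<omega> (cis t) P\<bar> < \<delta>"
      proof
        fix P assume "P \<in> F"
        then have "\<bar>evalc (principal {n}) (cis t) P - evalc \<omega> (cis t) P\<bar> \<le> \<delta>/2"
          using bspec[OF bspec[OF elim], of P "cis t"] by simp
        then show "\<bar>evalc (principal {n}) (cis t) P - evalc \<omega> (cis t) P\<bar> < \<delta>" using F(2) by linarith
      qed
      then have "\<bar>h (evalc (principal {n}) (cis t)) - h (evalc \<omega> (cis t))\<bar> < \<eta>/2"
        by (intro close imageI evalc_in_Disc[OF n]) simp_all
      then show ?thesis by simp
    qed
    then have "\<bar>(\<integral>t. h (evalc (principal {n}) (cis t)) \<partial>angle_measure) -
        (\<integral>t. h (evalc \<omega> (cis t)) \<partial>angle_measure)\<bar> \<le> \<eta>/2 + 0 * measure angle_measure {}"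
      by (intro angle.abs_integral_diff_le integrable_evalc_cis[OF n archimedean_at_principal h]
          integrable_evalc_cis[OF U ar h]) simp_all
    then show ?case using \<eta> by (simp add: dist_real_def)
  qed
qed


text \<open>Off the small angles, \<open>|P\<^sub>n(e\<^sup>i\<^sup>t)|\<^sup>\<epsilon>\<^sup>n\<close> is squeezed between \<open>c\<^sup>\<epsilon>\<^sup>n \<parallel>P\<^sub>n\<parallel>\<^sub>1\<^sup>\<epsilon>\<^sup>n\<close> and
  \<open>\<parallel>P\<^sub>n\<parallel>\<^sub>1\<^sup>\<epsilon>\<^sup>n\<close>, and both bounds tend to the Gauss norm since \<open>c\<^sup>\<epsilon>\<^sup>n \<rightarrow> 1\<close>.\<close>

lemma eventually_evalc_near_gauss:
  assumes U: "ultrafilter_on_nat \<omega>" and na: "\<not> archimedean_at \<epsilon> \<omega>"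
    and \<rho>: "0 < \<rho>" and \<delta>: "0 < \<delta>"
  shows "eventually (\<lambda>n. \<forall>t. t \<notin> small_angles ((\<rho>/3) ^ degree P) (slice_poly P n) \<longrightarrow>
    \<bar>evalc (principal {n}) (cis t) P - gauss \<epsilon> \<omega> P\<bar> < \<delta>) \<omega>"
proof (cases "P \<in> Apoly \<epsilon>")
  case False
  then show ?thesis using \<delta> by (simp add: evalpt_def gauss_def)
next
  case P: True
  define c where "c = (\<rho>/3) ^ degree P"
  have c: "0 < c" unfolding c_def using \<rho> by simp
  let ?N = "\<lambda>n. l1_norm (slice_poly P n) powr \<epsilon> n"
  have lim: "(?N \<longlongrightarrow> gauss \<epsilon> \<omega> P) \<omega>"
    unfolding gauss_eq_gauss_limit[OF U na P] by (rule tendsto_gauss_limit[OF U P])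
  have "eventually (\<lambda>n. ?N n < gauss \<epsilon> \<omega> P + \<delta>) \<omega>"
    using order_tendstoD(2)[OF lim] \<delta> by simp
  moreover have "eventually (\<lambda>n. gauss \<epsilon> \<omega> P - \<delta> < c powr \<epsilon> n * ?N n) \<omega>"
    using order_tendstoD(1)[OF tendsto_mult[OF powr_eps_tendsto_1_non_archimedean[OF U na c] lim]] \<delta>
    by simp
  ultimately show ?thesis
  proof eventually_elim
    case (elim n)
    show ?case
    proof (intro allI impI)
      fix t assume "t \<notin> small_angles ((\<rho>/3) ^ degree P) (slice_poly P n)"
      then have lo: "c * l1_norm (slice_poly P n) \<le> cmod (poly (slice_poly P n) (cis t))"
        unfolding small_angles_def c_def by simp
      have hi: "cmod (poly (slice_poly P n) (cis t)) \<le> l1_norm (slice_poly P n)"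
        by (rule norm_poly_le_l1_norm_disc) simp
      have "c powr \<epsilon> n * ?N n \<le> cmod (poly (slice_poly P n) (cis t)) powr \<epsilon> n"
        using lo c l1_norm_nonneg eps_pos[of n] by (simp add: powr_mono2 flip: powr_mult)
      moreover have "cmod (poly (slice_poly P n) (cis t)) powr \<epsilon> n \<le> ?N n"
        using hi eps_pos[of n] by (intro powr_mono2) auto
      ultimately show "\<bar>evalc (principal {n}) (cis t) P - gauss \<epsilon> \<omega> P\<bar> < \<delta>"
        using elim by (auto simp: evalc_principal[OF P])
    qed
  qed
qed

lemma tendsto_integral_non_archimedean:
  fixes h :: "seminorm \<Rightarrow> real"
  assumes U: "ultrafilter_on_nat \<omega>" and na: "\<not> archimedean_at \<epsilon> \<omega>" and h: "continuous_on (Disc \<epsilon>) h"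
  shows "((\<lambda>n. \<integral>t. h (evalc (principal {n}) (cis t)) \<partial>angle_measure) \<longlongrightarrow> h (gauss \<epsilon> \<omega>)) \<omega>"
proof (rule tendstoI)
  fix \<eta> :: real assume \<eta>: "0 < \<eta>"
  let ?g = "gauss \<epsilon> \<omega>"
  obtain M where M: "0 \<le> M" "\<And>x. x \<in> Disc \<epsilon> \<Longrightarrow> \<bar>h x\<bar> \<le> M"
    using continuous_on_Disc_bounded[OF h] by blast
  have g: "?g \<in> Disc \<epsilon>" by (rule gauss_in_Disc[OF U na])
  obtain F \<delta> where F: "finite F" "0 < \<delta>" and close:
    "\<forall>y\<in>Disc \<epsilon>. (\<forall>P\<in>F. \<bar>y P - ?g P\<bar> < \<delta>) \<longrightarrow> \<bar>h y - h ?g\<bar> < \<eta>/2"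
    using continuous_on_coordinate_box[OF h g, of "\<eta>/2"] \<eta> by auto
  define \<beta> where "\<beta> = \<eta> / (4 * (M + 1))"
  have \<beta>: "0 < \<beta>" "2 * M * \<beta> < \<eta>/2" unfolding \<beta>_def using M(1) \<eta> by (auto simp: field_simps)
  obtain \<rho> where \<rho>: "\<And>P. 0 < \<rho> P" "\<And>P. \<rho> P \<le> 1" and small:
    "\<And>n. measure angle_measure (\<Union>P\<in>F. small_angles ((\<rho> P/3) ^ degree P) (slice_poly P n)) \<le> \<beta>"
    using measure_Union_small_angles_le[OF F(1) \<beta>(1)] by blast
  have "eventually (\<lambda>n. \<forall>P\<in>F. \<forall>t. t \<notin> small_angles ((\<rho> P/3) ^ degree P) (slice_poly P n) \<longrightarrow>
      \<bar>evalc (principal {n}) (cis t) P - ?g P\<bar> < \<delta>) \<omega>"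
    by (intro eventually_ball_finite[OF F(1)] ballI eventually_evalc_near_gauss U na \<rho>(1) F(2))
  then show
    "eventually (\<lambda>n. dist (\<integral>t. h (evalc (principal {n}) (cis t)) \<partial>angle_measure) (h ?g) < \<eta>) \<omega>"
  proof eventually_elim
    case (elim n)
    have n: "ultrafilter_on_nat (principal {n})" by (rule ultrafilter_on_nat_principal)
    define B where "B = (\<Union>P\<in>F. small_angles ((\<rho> P/3) ^ degree P) (slice_poly P n))"
    have B: "B \<in> sets borel" unfolding B_def using F(1) by (intro sets.finite_UN) auto
    have "\<bar>h (evalc (principal {n}) (cis t)) - h ?g\<bar> \<le> \<eta>/2 + 2 * M * indicator B t" for t
    proof (cases "t \<in> B")
      case True
      have "\<bar>h (evalc (principal {n}) (cis t))\<bar> \<le> M" "\<bar>h ?g\<bar> \<le> M"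
        using M(2) evalc_in_Disc[OF n] g by auto
      then show ?thesis using True \<eta> by simp
    next
      case False
      then have "\<bar>h (evalc (principal {n}) (cis t)) - h ?g\<bar> < \<eta>/2"
        using elim close evalc_in_Disc[OF n] unfolding B_def by simp
      then show ?thesis using False by simp
    qed
    then have "\<bar>(\<integral>t. h (evalc (principal {n}) (cis t)) \<partial>angle_measure) - (\<integral>t. h ?g \<partial>angle_measure)\<bar>
        \<le> \<eta>/2 + 2 * M * measure angle_measure B"
      using M(1) B
      by (intro angle.abs_integral_diff_le integrable_evalc_cis[OF n archimedean_at_principal h])
        auto
    also have "\<dots> \<le> \<eta>/2 + 2 * M * \<beta>"
      using small[of n] M(1) unfolding B_def by (intro add_left_mono mult_left_mono) auto
    finally show ?case using \<beta>(2) angle.prob_space by (simp add: dist_real_def)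
  qed
qed


lemma integral_mu_can_fibre_archimedean:
  assumes U: "ultrafilter_on_nat \<nu>" and ar: "archimedean_at \<epsilon> \<nu>"
    and f: "continuous_map (P1top \<epsilon>) euclideanreal f"
  shows "(\<integral>p. f p \<partial>mu_can_fibre \<epsilon> \<nu>) = (\<integral>t. f (chart0 (evalc \<nu> (cis t))) \<partial>angle_measure)"
proof -
  have "(\<lambda>t. chart0 (evalc \<nu> (cis t))) \<in> angle_measure \<rightarrow>\<^sub>M borel_on (P1top \<epsilon>)"
    by (intro measurable_chart0_path continuous_on_evalc_cis U ar evalc_in_Disc) simp
  moreover have "mu_can_fibre \<epsilon> \<nu> =
      distr angle_measure (borel_on (P1top \<epsilon>)) (\<lambda>t. chart0 (evalc \<nu> (cis t)))"
    unfolding mu_can_fibre_def angle_measure_def using ar by simp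
  ultimately show ?thesis using integral_distr borel_measurable_borel_on[OF f] by simp
qed

lemma integral_mu_can_fibre_non_archimedean:
  assumes U: "ultrafilter_on_nat \<nu>" and na: "\<not> archimedean_at \<epsilon> \<nu>"
    and f: "continuous_map (P1top \<epsilon>) euclideanreal f"
  shows "(\<integral>p. f p \<partial>mu_can_fibre \<epsilon> \<nu>) = f (chart0 (gauss \<epsilon> \<nu>))"
proof -
  have "chart0 (gauss \<epsilon> \<nu>) \<in> space (borel_on (P1top \<epsilon>))"
    unfolding space_borel_on topspace_P1top by (rule chart0_in_P1[OF gauss_in_Disc[OF U na]])
  then show ?thesis
    unfolding mu_can_fibre_def using na integral_return borel_measurable_borel_on[OF f] by simp
qed

lemma continuous_map_integral_mu_can_fibre:
  assumes f: "continuous_map (P1top \<epsilon>) euclideanreal f"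
  shows "continuous_map betaN_top euclideanreal (\<lambda>\<omega>. \<integral>p. f p \<partial>mu_can_fibre \<epsilon> \<omega>)"
proof (rule continuous_map_betaN_top)
  fix \<omega> assume "\<omega> \<in> betaN"
  then have U: "ultrafilter_on_nat \<omega>" by (simp add: betaN_def)
  have h: "continuous_on (Disc \<epsilon>) (\<lambda>x. f (chart0 x))" by (rule continuous_on_Disc_chart0[OF f])
  show "((\<lambda>n. \<integral>p. f p \<partial>mu_can_fibre \<epsilon> (principal {n})) \<longlongrightarrow> (\<integral>p. f p \<partial>mu_can_fibre \<epsilon> \<omega>)) \<omega>"
    unfolding integral_mu_can_fibre_archimedean[OF ultrafilter_on_nat_principal
        archimedean_at_principal f]
  proof (cases "archimedean_at \<epsilon> \<omega>")
    case True
    then show "((\<lambda>n. \<integral>t. f (chart0 (evalc (principal {n}) (cis t))) \<partial>angle_measure) \<longlongrightarrow>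
        (\<integral>p. f p \<partial>mu_can_fibre \<epsilon> \<omega>)) \<omega>"
      using tendsto_integral_archimedean[OF U True h] integral_mu_can_fibre_archimedean[OF U True f]
      by simp
  next
    case False
    then show "((\<lambda>n. \<integral>t. f (chart0 (evalc (principal {n}) (cis t))) \<partial>angle_measure) \<longlongrightarrow>
        (\<integral>p. f p \<partial>mu_can_fibre \<epsilon> \<omega>)) \<omega>"
      using tendsto_integral_non_archimedean[OF U False h]
        integral_mu_can_fibre_non_archimedean[OF U False f]
      by simp
  qed
qed

end

theorem mainTheorem17:
  fixes \<epsilon> :: "nat \<Rightarrow> real"
  assumes "\<forall>n. 0 < \<epsilon> n \<and> \<epsilon> n \<le> 1"
  shows "continuous_map betaN_top (weak_star_top \<epsilon>) (mu_can_fibre \<epsilon>)"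
proof -
  interpret exponent_sequence \<epsilon> by unfold_locales (rule assms)
  let ?S = "{{\<mu>. (\<integral>p. f p \<partial>\<mu>) \<in> U} | f U. continuous_map (P1top \<epsilon>) euclideanreal f \<and> open U}"
  have "UNIV \<in> ?S" by (intro CollectI exI[of _ "\<lambda>_. 0"] exI[of _ UNIV]) simp
  then show ?thesis
    unfolding weak_star_top_def
  proof (intro continuous_on_generated_topo)
    fix W assume "W \<in> ?S"
    then obtain f U where W: "W = {\<mu>. (\<integral>p. f p \<partial>\<mu>) \<in> U}"
      and f: "continuous_map (P1top \<epsilon>) euclideanreal f" and U: "open U" by blast
    then show "openin betaN_top (mu_can_fibre \<epsilon> -` W \<inter> topspace betaN_top)"
      using openin_continuous_map_preimage[OF continuous_map_integral_mu_can_fibre[OF f], of U]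
      by (simp add: Int_def conj_commute)
  qed blast
qed

end
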